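(* Under the assumptions stated in the context, the function $x_i^{\mathrm{cv}}$ is L-smooth at $\hat{\mathbf{p}}$, and for any $\mathbf{M}=[\mathbf{m}_{(1)}\;\cdots\;\mathbf{m}_{(r)}]\in\mathbb{R}^{n_p\times r}$, the sequence of functions \begin{equation*} \begin{aligned} &[x_i^{\mathrm{cv}}]^{(0)}_{\hat{\mathbf{p}},\mathbf{M}}:\mathbb{R}^{n_p}\to\mathbb{R}:\mathbf{d}\mapsto[x_i^{\mathrm{cv}}]'(\hat{\mathbf{p}};\mathbf{d}),\\ &[x_i^{\mathrm{cv}}]^{(j)}_{\hat{\mathbf{p}},\mathbf{M}}:\mathbb{R}^{n_p}\to\mathbb{R}:\mathbf{d}\mapsto\left[[x_i^{\mathrm{cv}}]^{(j-1)}_{\hat{\mathbf{p}},\mathbf{M}}\right]'(\mathbf{m}_{(j)};\mathbf{d}),\quad \forall j\in\{1,...,r\}, \end{aligned} \end{equation*} is well-defined and given by: for each $j\in\{0,...,r\}$, \begin{equation*} \begin{aligned} [x_i^{\mathrm{cv}}]^{(j)}_{\hat{\mathbf{p}},\mathbf{M}}(\mathbf{d})=\max_{\boldsymbol{\lambda}^{\mathrm{A}},\boldsymbol{\lambda}^{\mathrm{B}}}\quad&[\mathbf{G}\mathbf{d}]^\top\boldsymbol{\lambda}\\ \text{s.t.}\quad& \mathbf{A}^\top\boldsymbol{\lambda}^{\mathrm{A}} + \mathbf{B}^\top\boldsymbol{\lambda}^{\mathrm{B}} = \mathbf{e}^{(i)},\quad \boldsymbol{\lambda}^{\mathrm{A}}\le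 \mathbf{0},\\ &-[\mathbf{G}\mathbf{m}_{(q)}]^\top\boldsymbol{\lambda}\le -[x_i^{\mathrm{cv}}]_{\hat{\mathbf{p}},\mathbf{M}}^{(q-1)}(\mathbf{m}_{(q)}),\quad \forall q\in\{1,\dots,j\}, \end{aligned} \end{equation*} with $\boldsymbol{\lambda} := (\boldsymbol{\lambda}^{\mathrm{A}},\boldsymbol{\lambda}^{\mathrm{B}})$ and $\mathbf{G}:=\begin{bmatrix}\mathbf{G}^{\mathrm{A}}\\\mathbf{G}^{\mathrm{B}}\end{bmatrix}$ (for $j=0$ the last family of constraints is absent). Moreover, for each $j\in\{0,...,r-1\}$ let $D^{(j)}_{\hat{\mathbf{p}},\mathbf{M}}$ be the optimal solution set of the LP defining $[x_i^{\mathrm{cv}}]^{(j)}_{\hat{\mathbf{p}},\mathbf{M}}(\mathbf{m}_{(j+1)})$. Then for each $j\in\{1,...,r-1\}$, \begin{equation*} D^{(j)}_{\hat{\mathbf{p}},\mathbf{M}}\equiv\Big(\arg\max _{\boldsymbol{\lambda}\in D^{(j-1)}_{\hat{\mathbf{p}},\mathbf{M}}}[\mathbf{G}\mathbf{m}_{(j+1)}]^\top\boldsymbol{\lambda}\Big)\subset D^{(j-1)}_{\hat{\mathbf{p}},\mathbf{M}}, \end{equation*} and the LD-derivative of $x_i^{\mathrm{cv}}$ at $\hat{\mathbf{p}}$ in the directions $\mathbf{M}$ is \begin{equation*} [x_i^{\mathrm{cv}}]'(\hat{\mathbf{p}};\mathbf{M})\equiv\boldsymbol{\lambda}^\top\mathbf{G}\mathbf{M},\quad\text{for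 any }\boldsymbol{\lambda}\in D^{(r-1)}_{\hat{\mathbf{p}},\mathbf{M}}. \end{equation*}
   Context: Setting: a residual function $\mathbf{f}:\mathbb{R}^{n_x}\times\mathbb{R}^{n_p}\to\mathbb{R}^{n_x}$, a convex compact set $P\subset\mathbb{R}^{n_p}$, and $Q\subset P$ the (nonempty) set of $\mathbf{p}\in P$ for which $\mathbf{f}(\mathbf{z},\mathbf{p})=\mathbf{0}$ has a solution; an implicit function $\mathbf{x}:Q\to\mathbb{R}^{n_x}$ satisfies $\mathbf{f}(\mathbf{x}(\mathbf{p}),\mathbf{p})=\mathbf{0}$ with $\mathbf{x}(\mathbf{p})\in X:=[\mathbf{x}^{\mathrm{L}},\mathbf{x}^{\mathrm{U}}]$. Given convex/concave relaxations $\mathbf{f}^{\mathrm{cv}},\mathbf{f}^{\mathrm{cc}}$ of $\mathbf{f}$ on $X\times P$, $x_i^{\mathrm{cv}}(\mathbf{p}):=\inf_{\boldsymbol{\xi}\in X}\xi_i$ s.t. $\mathbf{f}^{\mathrm{cv}}(\boldsymbol{\xi},\mathbf{p})\le\mathbf{0}\le\mathbf{f}^{\mathrm{cc}}(\boldsymbol{\xi},\mathbf{p})$. Assume $\mathbf{f}\equiv(\tilde{\mathbf{f}},\mathbf{h})$ with $\mathbf{h}:\mathbb{R}^{n_x}\times\mathbb{R}^{n_p}\to\mathbb{R}^{n_h}$ affine and each $\tilde f_k$ non-affine, whose relaxations are pointwise max of continuously differentiable convex functions (for $\tilde f_k^{\mathrm{cv}}$) and pointwise min of continuously differentiable concave functions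 (for $\tilde f_k^{\mathrm{cc}}$); then $x_i^{\mathrm{cv}}(\mathbf{p})=\min_{\boldsymbol{\xi}\in\mathbb{R}^{n_x}}\xi_i$ s.t. $\mathbf{h}(\boldsymbol{\xi},\mathbf{p})=\mathbf{0}$, $\mathbf{g}(\boldsymbol{\xi},\mathbf{p})\le\mathbf{0}$, where $\mathbf{g}:\mathbb{R}^{n_x}\times\mathbb{R}^{n_p}\to\mathbb{R}^{n_g}$ collects all these smooth inequality constraints and the box constraint $\boldsymbol{\xi}\in X$. At $\hat{\mathbf{p}}\in\mathrm{int}(Q)$ assume the $\boldsymbol{\xi}$-gradients of the components of $\mathbf{h}$ are linearly independent and that a strong Slater condition holds on a neighborhood $N_{\hat{\mathbf{p}}}\subset Q$ (for each $\mathbf{p}\in N_{\hat{\mathbf{p}}}$ there is $\boldsymbol{\xi}_\mathbf{p}\in X$ with $\mathbf{h}(\boldsymbol{\xi}_\mathbf{p},\mathbf{p})=\mathbf{0}$, $\mathbf{g}(\boldsymbol{\xi}_\mathbf{p},\mathbf{p})<\mathbf{0}$). Let $\hat{\boldsymbol{\xi}}$ be any optimal solution of this problem at $\hat{\mathbf{p}}$. Then the directional derivative satisfies $[x_i^{\mathrm{cv}}]'(\hat{\mathbf{p}};\mathbf{d})=\min_{\mathbf{w}\in\mathbb{R}^{n_x}}[\mathbf{e}^{(i)}]^\top\mathbf{w}$ s.t. $\mathbf{A}\mathbf{w}\le\mathbf{G}^{\mathrm{A}}\mathbf{d}$, $\mathbf{B}\mathbf{w}=\mathbf{G}^{\mathrm{B}}\mathbf{d}$,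 where $\mathbf{A}\in\mathbb{R}^{n_A\times n_x}$ has rows $[\nabla_\mathbf{x}g_k(\hat{\boldsymbol{\xi}},\hat{\mathbf{p}})]^\top$ and $\mathbf{G}^{\mathrm{A}}\in\mathbb{R}^{n_A\times n_p}$ has rows $-[\nabla_\mathbf{y}g_k(\hat{\boldsymbol{\xi}},\hat{\mathbf{p}})]^\top$ over the active indices $k$ (those with $g_k(\hat{\boldsymbol{\xi}},\hat{\mathbf{p}})=0$), and $\mathbf{B}\in\mathbb{R}^{n_B\times n_x}$ has rows $[\nabla_\mathbf{x}h_j(\hat{\boldsymbol{\xi}},\hat{\mathbf{p}})]^\top$ and $\mathbf{G}^{\mathrm{B}}\in\mathbb{R}^{n_B\times n_p}$ has rows $-[\nabla_\mathbf{y}h_j(\hat{\boldsymbol{\xi}},\hat{\mathbf{p}})]^\top$ over the components of $\mathbf{h}$; $\nabla_\mathbf{x},\nabla_\mathbf{y}$ denote partial gradients with respect to $\boldsymbol{\xi}$ and $\mathbf{p}$. $\mathbf{e}^{(i)}$ is the $i$th unit coordinate vector. L-smoothness and the LD-derivative $[x_i^{\mathrm{cv}}]'(\hat{\mathbf{p}};\mathbf{M}):=[[x_i^{\mathrm{cv}}]^{(0)}_{\hat{\mathbf{p}},\mathbf{M}}(\mathbf{m}_{(1)})\;\cdots\;[x_i^{\mathrm{cv}}]^{(r-1)}_{\hat{\mathbf{p}},\mathbf{M}}(\mathbf{m}_{(r)})]$ are in the sense of Nesterov and Khan–Barton. *)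

theory Defs
  imports "HOL-Analysis.Analysis"
begin

definition has_dir_deriv :: "('a::real_normed_vector \<Rightarrow> real) \<Rightarrow> 'a \<Rightarrow> 'a \<Rightarrow> real \<Rightarrow> bool" where
  "has_dir_deriv F x d L \<longleftrightarrow> ((\<lambda>t. (F (x + t *\<^sub>R d) - F x) / t) \<longlongrightarrow> L) (at_right 0)"

definition dir_deriv :: "('a::real_normed_vector \<Rightarrow> real) \<Rightarrow> 'a \<Rightarrow> 'a \<Rightarrow> real" where
  "dir_deriv F x d = (THE L. has_dir_deriv F x d L)"

text \<open>Homogenization sequence: ld_seq F x ms 0 = F'(x;.), and
  ld_seq F x ms (j+1) = [ld_seq F x ms j]'(m_(j+1); .), where m_(j+1) = ms ! j.\<close>
fun ld_seq :: "('a::real_normed_vector \<Rightarrow> real) \<Rightarrow> 'a \<Rightarrow> 'a list \<Rightarrow> nat \<Rightarrow> 'a \<Rightarrow> real" where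
  "ld_seq F x ms 0 = (\<lambda>d. dir_deriv F x d)"
| "ld_seq F x ms (Suc j) = (\<lambda>d. dir_deriv (ld_seq F x ms j) (ms ! j) d)"

definition L_smooth_at :: "('a::real_normed_vector \<Rightarrow> real) \<Rightarrow> 'a \<Rightarrow> bool" where
  "L_smooth_at F x \<longleftrightarrow>
     (\<exists>U C. open U \<and> x \<in> U \<and> C-lipschitz_on U F) \<and>
     (\<forall>d. \<exists>L. has_dir_deriv F x d L) \<and>
     (\<forall>ms. \<forall>j < length ms. \<forall>d. \<exists>L. has_dir_deriv (ld_seq F x ms j) (ms ! j) d L)"

definition ld_deriv :: "('a::real_normed_vector \<Rightarrow> real) \<Rightarrow> 'a \<Rightarrow> 'a list \<Rightarrow> real list" where
  "ld_deriv F x ms = map (\<lambda>j. ld_seq F x ms j (ms ! j)) [0..<length ms]"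

definition gradx :: "((real^'x) \<times> (real^'p) \<Rightarrow> real) \<Rightarrow> (real^'x) \<times> (real^'p) \<Rightarrow> real^'x" where
  "gradx F z = (\<chi> k. frechet_derivative F (at z) (axis k 1, 0))"

definition grady :: "((real^'x) \<times> (real^'p) \<Rightarrow> real) \<Rightarrow> (real^'x) \<times> (real^'p) \<Rightarrow> real^'p" where
  "grady F z = (\<chi> k. frechet_derivative F (at z) (0, axis k 1))"

definition C1_fun :: "('a::real_normed_vector \<Rightarrow> real) \<Rightarrow> bool" where
  "C1_fun F \<longleftrightarrow> (\<exists>F'. (\<forall>z. (F has_derivative blinfun_apply (F' z)) (at z)) \<and> continuous_on UNIV F')"

definition affine_fun :: "((real^'x) \<times> (real^'p) \<Rightarrow> real) \<Rightarrow> bool" where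
  "affine_fun F \<longleftrightarrow> (\<exists>a b c. \<forall>\<xi> p. F (\<xi>, p) = a \<bullet> \<xi> + b \<bullet> p + c)"

definition xbox :: "real^'x \<Rightarrow> real^'x \<Rightarrow> (real^'x) set" where
  "xbox xL xU = {\<xi>. \<forall>k. xL $ k \<le> \<xi> $ k \<and> \<xi> $ k \<le> xU $ k}"

definition xcv :: "((real^'x) \<times> (real^'p) \<Rightarrow> real^'x) \<Rightarrow> ((real^'x) \<times> (real^'p) \<Rightarrow> real^'x)
     \<Rightarrow> real^'x \<Rightarrow> real^'x \<Rightarrow> 'x \<Rightarrow> real^'p \<Rightarrow> real" where
  "xcv fcv fcc xL xU i p =
     Inf {\<xi> $ i | \<xi>. \<xi> \<in> xbox xL xU \<and> (\<forall>k. fcv (\<xi>, p) $ k \<le> 0 \<and> 0 \<le> fcc (\<xi>, p) $ k)}"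

text \<open>Index set of the smooth inequality constraints g: convex pieces of the convex
  relaxations, negated concave pieces of the concave relaxations, and the box constraints.\<close>
datatype ('x, 'l) gidx = GA 'x 'l | GB 'x 'l | GLo 'x | GUp 'x

fun gfun :: "('x \<Rightarrow> 'l \<Rightarrow> (real^'x) \<times> (real^'p) \<Rightarrow> real) \<Rightarrow> ('x \<Rightarrow> 'l \<Rightarrow> (real^'x) \<times> (real^'p) \<Rightarrow> real)
     \<Rightarrow> real^'x \<Rightarrow> real^'x \<Rightarrow> ('x, 'l) gidx \<Rightarrow> (real^'x) \<times> (real^'p) \<Rightarrow> real" where
  "gfun a b xL xU (GA k l) z = a k l z"
| "gfun a b xL xU (GB k l) z = - b k l z"
| "gfun a b xL xU (GLo k) z = xL $ k - fst z $ k"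
| "gfun a b xL xU (GUp k) z = fst z $ k - xU $ k"

definition gidxs :: "'x set \<Rightarrow> ('x \<Rightarrow> 'l set) \<Rightarrow> ('x \<Rightarrow> 'l set) \<Rightarrow> ('x, 'l) gidx set" where
  "gidxs Ih La Lb =
     {GA k l | k l. k \<notin> Ih \<and> l \<in> La k} \<union> {GB k l | k l. k \<notin> Ih \<and> l \<in> Lb k}
     \<union> range GLo \<union> range GUp"

definition red_feas :: "((real^'x) \<times> (real^'p) \<Rightarrow> real^'x) \<Rightarrow> 'x set \<Rightarrow> (('x,'l) gidx \<Rightarrow> (real^'x) \<times> (real^'p) \<Rightarrow> real)
     \<Rightarrow> ('x,'l) gidx set \<Rightarrow> real^'p \<Rightarrow> (real^'x) set" where
  "red_feas f Ih g K p = {\<xi>. (\<forall>j\<in>Ih. f (\<xi>, p) $ j = 0) \<and> (\<forall>k\<in>K. g k (\<xi>, p) \<le> 0)}"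

text \<open>Multipliers lam = (lam^A, lam^B), indexed by the active set KA and by the index set JB
  of the equality constraints; entries outside these index sets are fixed to 0.
  Gra k, Grb j are the rows of G^A, G^B; AA k, BB j the rows of A, B.\<close>
definition lp_obj :: "'k set \<Rightarrow> 'j set \<Rightarrow> ('k \<Rightarrow> 'v::real_inner) \<Rightarrow> ('j \<Rightarrow> 'v)
     \<Rightarrow> ('k \<Rightarrow> real) \<times> ('j \<Rightarrow> real) \<Rightarrow> 'v \<Rightarrow> real" where
  "lp_obj KA JB Gra Grb lam d = (\<Sum>k\<in>KA. fst lam k * (Gra k \<bullet> d)) + (\<Sum>j\<in>JB. snd lam j * (Grb j \<bullet> d))"

definition lp_dualfeas :: "'k set \<Rightarrow> 'j set \<Rightarrow> ('k \<Rightarrow> 'w::real_vector) \<Rightarrow> ('j \<Rightarrow> 'w) \<Rightarrow> 'w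
     \<Rightarrow> ('k \<Rightarrow> real) \<times> ('j \<Rightarrow> real) \<Rightarrow> bool" where
  "lp_dualfeas KA JB AA BB e lam \<longleftrightarrow>
     (\<Sum>k\<in>KA. fst lam k *\<^sub>R AA k) + (\<Sum>j\<in>JB. snd lam j *\<^sub>R BB j) = e \<and>
     (\<forall>k\<in>KA. fst lam k \<le> 0) \<and> (\<forall>k. k \<notin> KA \<longrightarrow> fst lam k = 0) \<and> (\<forall>j. j \<notin> JB \<longrightarrow> snd lam j = 0)"

definition lp_feas :: "'k set \<Rightarrow> 'j set \<Rightarrow> ('k \<Rightarrow> 'w::real_vector) \<Rightarrow> ('j \<Rightarrow> 'w) \<Rightarrow> 'w
     \<Rightarrow> ('k \<Rightarrow> 'v::real_inner) \<Rightarrow> ('j \<Rightarrow> 'v) \<Rightarrow> 'v list \<Rightarrow> (nat \<Rightarrow> 'v \<Rightarrow> real) \<Rightarrow> nat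
     \<Rightarrow> (('k \<Rightarrow> real) \<times> ('j \<Rightarrow> real)) set" where
  "lp_feas KA JB AA BB e Gra Grb ms phi j =
     {lam. lp_dualfeas KA JB AA BB e lam \<and>
       (\<forall>q\<in>{1..j}. - lp_obj KA JB Gra Grb lam (ms ! (q - 1)) \<le> - phi (q - 1) (ms ! (q - 1)))}"

definition is_max_val :: "'a set \<Rightarrow> ('a \<Rightarrow> real) \<Rightarrow> real \<Rightarrow> bool" where
  "is_max_val S c v \<longleftrightarrow> (\<exists>x\<in>S. c x = v) \<and> (\<forall>x\<in>S. c x \<le> v)"

definition argmax_set :: "'a set \<Rightarrow> ('a \<Rightarrow> real) \<Rightarrow> 'a set" where
  "argmax_set S c = {x\<in>S. \<forall>y\<in>S. c y \<le> c x}"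

end

(*
  Near ph the bound x_i^cv is the optimal value of a convex program in xi with affine equality
  constraints and C^1 inequality constraints satisfying a Slater condition.  By convexity its
  linearization at the optimum xih is a relaxation, which gives a lower bound through weak LP
  duality; a Slater direction makes every solution of the linearized program feasible to first
  order, which gives the matching upper bound.  Farkas' lemma closes the duality gap, so
  [x_i^cv]'(ph; d) is the optimal value of the dual LP, i.e. the support function of a
  polyhedron evaluated at d.  By Danskin's theorem for polyhedra, the directional derivative of
  such a support function at m is the support function of the face exposed by m, which is again
  a polyhedron; iterating along the directions of M gives the nested LPs.  Finally x_i^cv is
  convex and bounded near ph, hence Lipschitz there.
*)

theory Submission
  imports Defs
begin

section \<open>Linear programming duality\<close>

text \<open>With \<open>u\<close>, \<open>v\<close> the rows of \<open>A\<close>, \<open>B\<close>, \<open>lin_comb KA JB u v (\<lambda>\<^sup>A, \<lambda>\<^sup>B)\<close> is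
  \<open>A\<^sup>T \<lambda>\<^sup>A + B\<^sup>T \<lambda>\<^sup>B\<close>, and \<open>lp_primal\<close> is the feasible set of the LP
  \<open>min e\<^sup>T w  s.t.  A w \<le> G\<^sup>A d, B w = G\<^sup>B d\<close>, whose dual is the LP of \<open>lp_feas\<close> for \<open>j = 0\<close>.\<close>

definition lin_comb :: "'k set \<Rightarrow> 'j set \<Rightarrow> ('k \<Rightarrow> 'a::real_vector) \<Rightarrow> ('j \<Rightarrow> 'a)
     \<Rightarrow> ('k \<Rightarrow> real) \<times> ('j \<Rightarrow> real) \<Rightarrow> 'a" where
  "lin_comb KA JB u v lam = (\<Sum>k\<in>KA. fst lam k *\<^sub>R u k) + (\<Sum>j\<in>JB. snd lam j *\<^sub>R v j)"

definition restrict_mult :: "'k set \<Rightarrow> 'j set \<Rightarrow> ('k \<Rightarrow> real) \<times> ('j \<Rightarrow> real)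
     \<Rightarrow> ('k \<Rightarrow> real) \<times> ('j \<Rightarrow> real)" where
  "restrict_mult KA JB lam =
     ((\<lambda>k. if k \<in> KA then fst lam k else 0), (\<lambda>j. if j \<in> JB then snd lam j else 0))"

definition lp_primal :: "'k set \<Rightarrow> 'j set \<Rightarrow> ('k \<Rightarrow> 'w::real_inner) \<Rightarrow> ('j \<Rightarrow> 'w)
     \<Rightarrow> ('k \<Rightarrow> 'v::real_inner) \<Rightarrow> ('j \<Rightarrow> 'v) \<Rightarrow> 'v \<Rightarrow> 'w set" where
  "lp_primal KA JB AA BB Gra Grb d =
     {w. (\<forall>k\<in>KA. AA k \<bullet> w \<le> Gra k \<bullet> d) \<and> (\<forall>j\<in>JB. BB j \<bullet> w = Grb j \<bullet> d)}"

lemma inner_lin_comb: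
  "lin_comb KA JB u v lam \<bullet> w = (\<Sum>k\<in>KA. fst lam k * (u k \<bullet> w)) + (\<Sum>j\<in>JB. snd lam j * (v j \<bullet> w))"
  by (simp add: lin_comb_def inner_add_left inner_sum_left)

lemma lp_obj_eq_inner: "lp_obj KA JB Gra Grb lam d = lin_comb KA JB Gra Grb lam \<bullet> d"
  by (simp add: lp_obj_def inner_lin_comb)

lemma lp_obj_scaleR: "lp_obj KA JB Gra Grb lam (c *\<^sub>R d) = c * lp_obj KA JB Gra Grb lam d"
  by (simp add: lp_obj_eq_inner)

lemma lp_primal_scaleR:
  assumes "0 < c"
  shows "c *\<^sub>R w \<in> lp_primal KA JB AA BB Gra Grb (c *\<^sub>R d) \<longleftrightarrow> w \<in> lp_primal KA JB AA BB Gra Grb d"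
  using assms by (simp add: lp_primal_def mult_le_cancel_left_pos)

lemma lp_dualfeas_iff:
  "lp_dualfeas KA JB AA BB e lam \<longleftrightarrow> lin_comb KA JB AA BB lam = e \<and> (\<forall>k\<in>KA. fst lam k \<le> 0) \<and>
     (\<forall>k. k \<notin> KA \<longrightarrow> fst lam k = 0) \<and> (\<forall>j. j \<notin> JB \<longrightarrow> snd lam j = 0)"
  by (simp add: lp_dualfeas_def lin_comb_def)

lemma lin_comb_restrict_mult [simp]:
  "lin_comb KA JB u v (restrict_mult KA JB lam) = lin_comb KA JB u v lam"
  unfolding lin_comb_def restrict_mult_def by (intro arg_cong2[where f = "(+)"] sum.cong) auto

lemma lp_obj_restrict_mult [simp]:
  "lp_obj KA JB Gra Grb (restrict_mult KA JB lam) d = lp_obj KA JB Gra Grb lam d"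
  by (simp add: lp_obj_eq_inner)

lemma lp_dualfeas_restrict_mult:
  assumes "lin_comb KA JB AA BB lam = e" "\<forall>k\<in>KA. fst lam k \<le> 0"
  shows "lp_dualfeas KA JB AA BB e (restrict_mult KA JB lam)"
  unfolding lp_dualfeas_iff lin_comb_restrict_mult using assms by (auto simp: restrict_mult_def)

lemma lin_comb_Pair:
  "lin_comb K J (\<lambda>k. (a k, b k)) (\<lambda>j. (c j, d j)) lam
     = (lin_comb K J a c lam, lin_comb K J b d lam)"
  by (simp add: lin_comb_def prod_eq_iff fst_sum snd_sum)

lemma lin_comb_add:
  "lin_comb K J u v (\<lambda>k. fst l1 k + fst l2 k, \<lambda>j. snd l1 j + snd l2 j)
     = lin_comb K J u v l1 + lin_comb K J u v l2"
  by (simp add: lin_comb_def scaleR_add_left sum.distrib algebra_simps)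

lemma lin_comb_scale:
  "lin_comb K J u v (\<lambda>k. c * fst l k, \<lambda>j. c * snd l j) = c *\<^sub>R lin_comb K J u v l"
  by (simp add: lin_comb_def scaleR_add_right scaleR_sum_right)

lemma lin_comb_single:
  assumes "finite K" "finite J"
  shows "k \<in> K \<Longrightarrow> lin_comb K J u v (\<lambda>k'. if k' = k then c else 0, \<lambda>_. 0) = c *\<^sub>R u k"
    and "j \<in> J \<Longrightarrow> lin_comb K J u v (\<lambda>_. 0, \<lambda>j'. if j' = j then c else 0) = c *\<^sub>R v j"
  using assms by (simp_all add: lin_comb_def if_distrib[of "\<lambda>x. x *\<^sub>R _"] sum.delta' cong: if_cong)

lemma convex_cone_hull_sum:
  assumes "finite K" "\<forall>k\<in>K. 0 \<le> \<mu> k \<and> u k \<in> convex_cone hull G"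
  shows "(\<Sum>k\<in>K. \<mu> k *\<^sub>R u k) \<in> convex_cone hull G"
  using assms
proof (induction K rule: finite_induct)
  case empty
  then show ?case by (simp add: convex_cone_hull_contains_0)
next
  case (insert x F)
  then show ?case by (simp add: convex_cone_hull_add convex_cone_hull_mul)
qed

lemma convex_cone_lin_comb_cone:
  "convex_cone {lin_comb K J u v lam | lam. \<forall>k\<in>K. fst lam k \<le> 0}" (is "convex_cone ?C")
  unfolding convex_cone_iff
proof (intro conjI ballI allI impI)
  show "0 \<in> ?C"
    by (rule CollectI, rule exI[of _ "(\<lambda>_. 0, \<lambda>_. 0)"]) (simp add: lin_comb_def)
  show "x + y \<in> ?C" if x: "x \<in> ?C" and y: "y \<in> ?C" for x y
  proof -
    obtain l1 l2 where "x = lin_comb K J u v l1" "\<forall>k\<in>K. fst l1 k \<le> 0"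
      and "y = lin_comb K J u v l2" "\<forall>k\<in>K. fst l2 k \<le> 0" using x y by blast
    then show ?thesis
      by (intro CollectI exI[of _ "(\<lambda>k. fst l1 k + fst l2 k, \<lambda>j. snd l1 j + snd l2 j)"])
        (simp add: lin_comb_add add_nonpos_nonpos)
  qed
  show "c *\<^sub>R x \<in> ?C" if x: "x \<in> ?C" and c: "0 \<le> c" for x c
  proof -
    obtain l where "x = lin_comb K J u v l" "\<forall>k\<in>K. fst l k \<le> 0" using x by blast
    then show ?thesis using c
      by (intro CollectI exI[of _ "(\<lambda>k. c * fst l k, \<lambda>j. c * snd l j)"])
        (simp add: lin_comb_scale mult_nonneg_nonpos)
  qed
qed

lemma lin_comb_cone_eq_convex_cone_hull:
  fixes u :: "'k \<Rightarrow> 'a::real_vector" and v :: "'j \<Rightarrow> 'a"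
  assumes fin: "finite K" "finite J"
  shows "{lin_comb K J u v lam | lam. \<forall>k\<in>K. fst lam k \<le> 0}
           = convex_cone hull (uminus ` u ` K \<union> v ` J \<union> uminus ` v ` J)"
    (is "?C = convex_cone hull ?G")
proof
  show "?C \<subseteq> convex_cone hull ?G"
  proof clarify
    fix lam :: "('k \<Rightarrow> real) \<times> ('j \<Rightarrow> real)" assume lam: "\<forall>k\<in>K. fst lam k \<le> 0"
    have "lin_comb K J u v lam = (\<Sum>k\<in>K. (- fst lam k) *\<^sub>R (- u k))
        + (\<Sum>j\<in>J. \<bar>snd lam j\<bar> *\<^sub>R (if 0 \<le> snd lam j then v j else - v j))"
      unfolding lin_comb_def by (intro arg_cong2[where f = "(+)"] sum.cong) auto
    also have "\<dots> \<in> convex_cone hull ?G"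
      using fin lam by (intro convex_cone_hull_add convex_cone_hull_sum) (auto intro: hull_inc)
    finally show "lin_comb K J u v lam \<in> convex_cone hull ?G" .
  qed
  have "?G \<subseteq> ?C"
  proof -
    have "(- 1) *\<^sub>R u k \<in> ?C" if "k \<in> K" for k
      using lin_comb_single(1)[OF fin that, of u v "-1"]
      by (intro CollectI exI[of _ "(\<lambda>k'. if k' = k then -1 else 0, \<lambda>_. 0)"]) auto
    moreover have "c *\<^sub>R v j \<in> ?C" if "j \<in> J" for j c
      using lin_comb_single(2)[OF fin that, of u v c]
      by (intro CollectI exI[of _ "(\<lambda>_. 0, \<lambda>j'. if j' = j then c else 0)"]) auto
    from this[of _ 1] this[of _ "-1"] have "v j \<in> ?C" "- v j \<in> ?C" if "j \<in> J" for j
      using that by simp_all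
    ultimately show ?thesis by auto
  qed
  then show "convex_cone hull ?G \<subseteq> ?C"
    using convex_cone_lin_comb_cone by (rule hull_minimal)
qed

lemma polyhedron_lin_comb_cone:
  fixes u :: "'k \<Rightarrow> 'a::euclidean_space" and v :: "'j \<Rightarrow> 'a"
  assumes "finite K" "finite J"
  shows "polyhedron {lin_comb K J u v lam | lam. \<forall>k\<in>K. fst lam k \<le> 0}"
  unfolding lin_comb_cone_eq_convex_cone_hull[OF assms]
  by (rule polyhedron_convex_cone_hull) (simp add: assms)

lemma separating_hyperplane_closed_convex_cone:
  fixes C :: "'a::euclidean_space set"
  assumes cone: "convex_cone C" and "closed C" "c \<notin> C"
  obtains a where "a \<bullet> c < 0" "\<And>x. x \<in> C \<Longrightarrow> 0 \<le> a \<bullet> x"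
proof -
  have "convex C" using cone unfolding convex_cone_def by blast
  then obtain a b where ab: "a \<bullet> c < b" "\<forall>x\<in>C. b < a \<bullet> x"
    using separating_hyperplane_closed_point assms(2,3) by metis
  have b: "b < 0" using ab convex_cone_contains_0[OF cone] by auto
  then have "a \<bullet> c < 0" using ab(1) by simp
  moreover have "0 \<le> a \<bullet> x" if x: "x \<in> C" for x
  proof (rule ccontr)
    assume neg: "\<not> 0 \<le> a \<bullet> x"
    then have "0 \<le> b / (a \<bullet> x)" using b by (simp add: divide_nonpos_neg)
    then have "(b / (a \<bullet> x)) *\<^sub>R x \<in> C" using cone x by (simp add: convex_cone_scaleR)
    then have "b < a \<bullet> ((b / (a \<bullet> x)) *\<^sub>R x)" using ab(2) by blast
    then show False using neg by simp
  qed
  ultimately show thesis by (rule that)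
qed

text \<open>Farkas' lemma, with the sign convention \<open>\<lambda>\<^sup>A \<le> 0\<close> of the dual LPs.\<close>
lemma farkas_lemma:
  fixes u :: "'k \<Rightarrow> 'a::euclidean_space" and v :: "'j \<Rightarrow> 'a"
  assumes fin: "finite K" "finite J"
    and H: "\<And>w. \<forall>k\<in>K. 0 \<le> u k \<bullet> w \<Longrightarrow> \<forall>j\<in>J. v j \<bullet> w = 0 \<Longrightarrow> c \<bullet> w \<le> 0"
  shows "\<exists>lam. (\<forall>k\<in>K. fst lam k \<le> 0) \<and> lin_comb K J u v lam = c"
proof (rule ccontr)
  let ?G = "uminus ` u ` K \<union> v ` J \<union> uminus ` v ` J"
  define C where "C = {lin_comb K J u v lam | lam. \<forall>k\<in>K. fst lam k \<le> 0}"
  assume "\<nexists>lam. (\<forall>k\<in>K. fst lam k \<le> 0) \<and> lin_comb K J u v lam = c"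
  then have "c \<notin> C" by (auto simp: C_def)
  moreover have "convex_cone C" unfolding C_def by (rule convex_cone_lin_comb_cone)
  moreover have "closed C"
    unfolding C_def by (rule polyhedron_imp_closed[OF polyhedron_lin_comb_cone[OF fin]])
  ultimately obtain a where a: "a \<bullet> c < 0" and nonneg: "\<And>x. x \<in> C \<Longrightarrow> 0 \<le> a \<bullet> x"
    using separating_hyperplane_closed_convex_cone by blast
  have G_C: "x \<in> C" if "x \<in> ?G" for x
    unfolding C_def lin_comb_cone_eq_convex_cone_hull[OF fin] using that by (rule hull_inc)
  have "c \<bullet> - a \<le> 0"
  proof (rule H)
    show "\<forall>k\<in>K. 0 \<le> u k \<bullet> - a"
    proof
      fix k assume "k \<in> K"
      then have "0 \<le> a \<bullet> - u k" by (intro nonneg G_C) blast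
      then show "0 \<le> u k \<bullet> - a" by (simp add: inner_commute)
    qed
    show "\<forall>j\<in>J. v j \<bullet> - a = 0"
    proof
      fix j assume "j \<in> J"
      then have "0 \<le> a \<bullet> v j" "0 \<le> a \<bullet> - v j" by (intro nonneg G_C; blast)+
      then show "v j \<bullet> - a = 0" by (simp add: inner_commute)
    qed
  qed
  then show False using a by (simp add: inner_commute)
qed

lemma lp_weak_duality:
  assumes lam: "lp_dualfeas KA JB AA BB e lam" and w: "w \<in> lp_primal KA JB AA BB Gra Grb d"
  shows "lp_obj KA JB Gra Grb lam d \<le> e \<bullet> w"
proof -
  have "lp_obj KA JB Gra Grb lam d
      = (\<Sum>k\<in>KA. fst lam k * (Gra k \<bullet> d)) + (\<Sum>j\<in>JB. snd lam j * (Grb j \<bullet> d))"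
    by (simp add: lp_obj_def)
  also have "\<dots> \<le> (\<Sum>k\<in>KA. fst lam k * (AA k \<bullet> w)) + (\<Sum>j\<in>JB. snd lam j * (BB j \<bullet> w))"
    using lam w
    by (intro add_mono sum_mono) (auto simp: lp_dualfeas_iff lp_primal_def mult_left_mono_neg)
  also have "\<dots> = e \<bullet> w"
    using lam by (simp add: lp_dualfeas_iff inner_lin_comb[symmetric])
  finally show ?thesis .
qed

lemma lp_dual_feasible:
  fixes AA :: "'k \<Rightarrow> 'w::euclidean_space"
  assumes fin: "finite KA" "finite JB"
    and rec: "\<And>w. \<forall>k\<in>KA. AA k \<bullet> w \<le> 0 \<Longrightarrow> \<forall>j\<in>JB. BB j \<bullet> w = 0 \<Longrightarrow> 0 \<le> e \<bullet> w"
  shows "\<exists>lam. lp_dualfeas KA JB AA BB e lam"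
proof -
  have "\<exists>lam. (\<forall>k\<in>KA. fst lam k \<le> 0) \<and> lin_comb KA JB AA BB lam = e"
  proof (rule farkas_lemma[OF fin])
    fix w assume "\<forall>k\<in>KA. 0 \<le> AA k \<bullet> w" "\<forall>j\<in>JB. BB j \<bullet> w = 0"
    then show "e \<bullet> w \<le> 0" using rec[of "- w"] by simp
  qed
  then show ?thesis using lp_dualfeas_restrict_mult by blast
qed

lemma lin_comb_insert_None:
  assumes "finite K"
  shows "lin_comb (insert None (Some ` K)) J u v lam
           = fst lam None *\<^sub>R u None
             + lin_comb K J (\<lambda>k. u (Some k)) v (\<lambda>k. fst lam (Some k), snd lam)"
  using assms by (simp add: lin_comb_def sum.reindex)

text \<open>A lower bound \<open>c\<close> of the primal objective makes \<open>(e, c)\<close> nonpositive on the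
  homogenized primal cone (new variable \<open>s \<ge> 0\<close>); Farkas' lemma then yields a dual
  multiplier with objective at least \<open>c\<close>, so there is no duality gap.\<close>
lemma lp_homogenized_bound:
  assumes rec: "\<And>w. \<forall>k\<in>KA. AA k \<bullet> w \<le> 0 \<Longrightarrow> \<forall>j\<in>JB. BB j \<bullet> w = 0 \<Longrightarrow> 0 \<le> e \<bullet> w"
    and lower: "\<And>w. w \<in> lp_primal KA JB AA BB Gra Grb d \<Longrightarrow> c \<le> e \<bullet> w"
    and s: "0 \<le> s" and A: "\<forall>k\<in>KA. 0 \<le> AA k \<bullet> w + s * (Gra k \<bullet> d)"
    and B: "\<forall>j\<in>JB. BB j \<bullet> w + s * (Grb j \<bullet> d) = 0"
  shows "e \<bullet> w + s * c \<le> 0"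
proof (cases "s = 0")
  case True
  then show ?thesis using rec[of "- w"] A B by simp
next
  case False
  then have "(- 1 / s) *\<^sub>R w \<in> lp_primal KA JB AA BB Gra Grb d"
    using A B s by (auto simp: lp_primal_def field_simps)
  then have "c \<le> e \<bullet> ((- 1 / s) *\<^sub>R w)" by (rule lower)
  then show ?thesis using s False by (simp add: field_simps)
qed

lemma lp_dual_bound:
  fixes AA :: "'k \<Rightarrow> 'w::euclidean_space"
  assumes fin: "finite KA" "finite JB"
    and rec: "\<And>w. \<forall>k\<in>KA. AA k \<bullet> w \<le> 0 \<Longrightarrow> \<forall>j\<in>JB. BB j \<bullet> w = 0 \<Longrightarrow> 0 \<le> e \<bullet> w"
    and lower: "\<And>w. w \<in> lp_primal KA JB AA BB Gra Grb d \<Longrightarrow> c \<le> e \<bullet> w"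
  shows "\<exists>lam. lp_dualfeas KA JB AA BB e lam \<and> c \<le> lp_obj KA JB Gra Grb lam d"
proof -
  \<comment> \<open>The extra index \<open>None\<close> carries the homogenizing variable.\<close>
  define K' where "K' = insert None (Some ` KA)"
  define ua where "ua opt = (case opt of None \<Rightarrow> 0 | Some k \<Rightarrow> AA k)" for opt
  define ub where "ub opt = (case opt of None \<Rightarrow> 1 | Some k \<Rightarrow> Gra k \<bullet> d)" for opt
  have "\<exists>lam'. (\<forall>k\<in>K'. fst lam' k \<le> 0) \<and>
      lin_comb K' JB (\<lambda>opt. (ua opt, ub opt)) (\<lambda>j. (BB j, Grb j \<bullet> d)) lam' = (e, c)"
  proof (rule farkas_lemma)
    fix ws :: "'w \<times> real"
    assume "\<forall>k\<in>K'. 0 \<le> (ua k, ub k) \<bullet> ws" "\<forall>j\<in>JB. (BB j, Grb j \<bullet> d) \<bullet> ws = 0"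
    then show "(e, c) \<bullet> ws \<le> 0"
      using lp_homogenized_bound[OF rec lower, where s = "snd ws" and w = "fst ws"]
      by (cases ws) (auto simp: K'_def ua_def ub_def mult.commute)
  qed (use fin in \<open>auto simp: K'_def\<close>)
  then obtain lam' where lam': "\<forall>k\<in>K'. fst lam' k \<le> 0"
    and eq: "lin_comb K' JB (\<lambda>opt. (ua opt, ub opt)) (\<lambda>j. (BB j, Grb j \<bullet> d)) lam' = (e, c)"
    by blast
  define lam where "lam = (\<lambda>k. fst lam' (Some k), snd lam')"
  have "lin_comb KA JB AA BB lam = e"
    using eq fin by (simp add: lin_comb_Pair K'_def lin_comb_insert_None lam_def ua_def)
  moreover have "\<forall>k\<in>KA. fst lam k \<le> 0" using lam' by (simp add: K'_def lam_def)
  ultimately have "lp_dualfeas KA JB AA BB e (restrict_mult KA JB lam)"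
    by (rule lp_dualfeas_restrict_mult)
  moreover have "c = fst lam' None + lin_comb KA JB (\<lambda>k. Gra k \<bullet> d) (\<lambda>j. Grb j \<bullet> d) lam"
    using eq fin by (simp add: lin_comb_Pair K'_def lin_comb_insert_None lam_def ub_def)
  then have "c \<le> lp_obj KA JB Gra Grb lam d"
    using lam' by (simp add: K'_def lp_obj_def lin_comb_def)
  then have "c \<le> lp_obj KA JB Gra Grb (restrict_mult KA JB lam) d" by simp
  ultimately show ?thesis by blast
qed

lemma lp_strong_duality:
  fixes AA :: "'k \<Rightarrow> 'w::euclidean_space"
  assumes fin: "finite KA" "finite JB"
    and feas: "lp_primal KA JB AA BB Gra Grb d \<noteq> {}"
    and rec: "\<And>w. \<forall>k\<in>KA. AA k \<bullet> w \<le> 0 \<Longrightarrow> \<forall>j\<in>JB. BB j \<bullet> w = 0 \<Longrightarrow> 0 \<le> e \<bullet> w"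
  shows "is_max_val {lam. lp_dualfeas KA JB AA BB e lam} (\<lambda>lam. lp_obj KA JB Gra Grb lam d)
           (Inf ((\<bullet>) e ` lp_primal KA JB AA BB Gra Grb d))"
proof -
  let ?W = "(\<bullet>) e ` lp_primal KA JB AA BB Gra Grb d"
  obtain lam0 where lam0: "lp_dualfeas KA JB AA BB e lam0"
    using lp_dual_feasible[OF fin rec] by blast
  have bdd: "bdd_below ?W"
    using lp_weak_duality[OF lam0] by (rule bdd_belowI2)
  have "\<exists>lam. lp_dualfeas KA JB AA BB e lam \<and> Inf ?W \<le> lp_obj KA JB Gra Grb lam d"
    using bdd by (intro lp_dual_bound[OF fin rec] cInf_lower) auto
  moreover have "lp_obj KA JB Gra Grb lam d \<le> Inf ?W" if "lp_dualfeas KA JB AA BB e lam" for lam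
    using feas lp_weak_duality[OF that] by (intro cInf_greatest) auto
  ultimately show ?thesis unfolding is_max_val_def by (blast intro: order_antisym)
qed

section \<open>Directional derivatives and Danskin's theorem for polyhedra\<close>

lemma dir_deriv_eqI:
  assumes "has_dir_deriv F x d L"
  shows "dir_deriv F x d = L"
  unfolding dir_deriv_def
proof (rule the_equality)
  show "has_dir_deriv F x d L" by (rule assms)
  show "L' = L" if "has_dir_deriv F x d L'" for L'
    using that assms unfolding has_dir_deriv_def
    by (intro tendsto_unique[OF trivial_limit_at_right_real])
qed

lemma has_derivative_imp_has_dir_deriv:
  fixes F :: "'a::real_normed_vector \<Rightarrow> real"
  assumes D: "(F has_derivative F') (at x)"
  shows "has_dir_deriv F x u (F' u)"
proof -
  have "((\<lambda>t. x + t *\<^sub>R u) has_derivative (\<lambda>t. t *\<^sub>R u)) (at 0)"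
    by (auto intro!: derivative_eq_intros)
  from has_derivative_compose[OF this] D
  have "((\<lambda>t. F (x + t *\<^sub>R u)) has_derivative (\<lambda>t. F' (t *\<^sub>R u))) (at 0)" by simp
  moreover have "(\<lambda>t. F' (t *\<^sub>R u)) = (*) (F' u)"
    using linear.scaleR[OF has_derivative_linear[OF D]] by (auto simp: fun_eq_iff mult.commute)
  ultimately have "((\<lambda>t. F (x + t *\<^sub>R u)) has_field_derivative F' u) (at 0)"
    by (simp add: has_field_derivative_def)
  then have "((\<lambda>t. (F (x + t *\<^sub>R u) - F x) / t) \<longlongrightarrow> F' u) (at 0)"
    by (simp add: DERIV_def)
  then show ?thesis
    unfolding has_dir_deriv_def by (rule tendsto_mono[rotated]) (simp add: at_le)
qed

lemma convex_on_has_derivative_ge: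
  fixes F :: "'a::real_normed_vector \<Rightarrow> real"
  assumes cv: "convex_on S F" and x: "x \<in> S" and y: "y \<in> S"
    and D: "(F has_derivative F') (at x)"
  shows "F x + F' (y - x) \<le> F y"
proof -
  have "((\<lambda>t. (F (x + t *\<^sub>R (y - x)) - F x) / t) \<longlongrightarrow> F' (y - x)) (at_right 0)"
    using has_derivative_imp_has_dir_deriv[OF D] by (simp add: has_dir_deriv_def)
  moreover have "\<forall>\<^sub>F t in at_right 0. (F (x + t *\<^sub>R (y - x)) - F x) / t \<le> F y - F x"
    unfolding eventually_at_right_field
  proof (intro exI[of _ 1] conjI allI impI)
    fix t :: real assume t: "0 < t" "t < 1"
    have "F ((1 - t) *\<^sub>R x + t *\<^sub>R y) \<le> (1 - t) * F x + t * F y"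
      using t x y by (intro convex_onD[OF cv]) auto
    moreover have "x + t *\<^sub>R (y - x) = (1 - t) *\<^sub>R x + t *\<^sub>R y" by (simp add: algebra_simps)
    ultimately have "F (x + t *\<^sub>R (y - x)) - F x \<le> t * (F y - F x)" by (simp add: algebra_simps)
    then show "(F (x + t *\<^sub>R (y - x)) - F x) / t \<le> F y - F x"
      using t by (simp add: divide_le_eq mult.commute)
  qed simp
  ultimately have "F' (y - x) \<le> F y - F x" by (rule tendsto_upperbound) simp
  then show ?thesis by simp
qed

lemma linear_eq_inner_vec:
  fixes L :: "real^'n \<Rightarrow> real"
  assumes "linear L"
  shows "L u = (\<chi> k. L (axis k 1)) \<bullet> u"
proof -
  have "L u = L (\<Sum>k\<in>UNIV. u $ k *\<^sub>R axis k 1)"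
    using basis_expansion[of u] by (simp add: scalar_mult_eq_scaleR)
  also have "\<dots> = (\<Sum>k\<in>UNIV. u $ k * L (axis k 1))"
    by (simp add: linear_sum[OF assms] linear_scale[OF assms])
  also have "\<dots> = (\<chi> k. L (axis k 1)) \<bullet> u"
    by (simp add: inner_vec_def mult.commute)
  finally show ?thesis .
qed

lemma has_derivative_partial_gradients:
  fixes F :: "(real^'x) \<times> (real^'p) \<Rightarrow> real"
  assumes D: "(F has_derivative F') (at z)"
  shows "F' (u, v) = gradx F z \<bullet> u + grady F z \<bullet> v"
proof -
  have lin: "linear F'" using D by (rule has_derivative_linear)
  have "linear (\<lambda>u::real^'x. (u, 0::real^'p))" "linear (\<lambda>v::real^'p. (0::real^'x, v))"
    by (simp_all add: linearI)
  then have "linear (\<lambda>u. F' (u, 0))" "linear (\<lambda>v. F' (0, v))"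
    using linear_compose[OF _ lin] by (simp_all add: o_def)
  moreover have "F' (u, v) = F' (u, 0) + F' (0, v)"
    using linear_add[OF lin, of "(u, 0)" "(0, v)"] by simp
  ultimately show ?thesis
    unfolding gradx_def grady_def frechet_derivative_at[OF D, symmetric]
    by (simp add: linear_eq_inner_vec[of "\<lambda>u. F' (u, 0)" u]
        linear_eq_inner_vec[of "\<lambda>v. F' (0, v)" v])
qed

lemma nonpos_if_frequently_le_inverse:
  fixes a b :: real
  assumes "\<exists>\<^sub>F n in sequentially. a \<le> b / real (Suc n)"
  shows "a \<le> 0"
proof (rule ccontr)
  assume "\<not> a \<le> 0"
  moreover have "(\<lambda>n. b * inverse (real (Suc n))) \<longlonglongrightarrow> 0"
    by (rule tendsto_mult_right_zero[OF LIMSEQ_inverse_real_of_nat])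
  then have "(\<lambda>n. b / real (Suc n)) \<longlonglongrightarrow> 0" by (simp add: divide_inverse)
  ultimately have "\<forall>\<^sub>F n in sequentially. b / real (Suc n) < a"
    by (intro order_tendstoD(2)) auto
  then have "\<forall>\<^sub>F n in sequentially. \<not> a \<le> b / real (Suc n)" by eventually_elim simp
  then show False using assms by (simp add: frequently_def)
qed

lemma polyhedron_frequent_maximizer:
  fixes T :: "'a::euclidean_space set" and c :: "nat \<Rightarrow> 'a"
  assumes T: "polyhedron T" and max: "\<And>n. is_max_val T (\<lambda>t. t \<bullet> c n) (h n)"
  shows "\<exists>t0\<in>T. \<exists>\<^sub>F n in sequentially. t0 \<bullet> c n = h n"
proof -
  define Fc where "Fc n = T \<inter> {t. c n \<bullet> t = h n}" for n
  have "Fc n face_of T" for n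
    unfolding Fc_def using max[of n]
    by (intro face_of_Int_supporting_hyperplane_le polyhedron_imp_convex[OF T])
      (auto simp: is_max_val_def inner_commute)
  then have "finite (range Fc)"
    by (intro finite_subset[OF _ finite_polyhedron_faces[OF T]]) auto
  then obtain F where "F \<in> range Fc" and inf: "infinite (Fc -` {F})"
    using inf_img_fin_dom[of Fc UNIV] by auto
  then obtain n0 where n0: "Fc n0 = F" by blast
  obtain t0 where t0: "t0 \<in> Fc n0"
    using max[of n0] by (auto simp: is_max_val_def Fc_def inner_commute)
  have "Fc -` {F} \<subseteq> {n. t0 \<bullet> c n = h n}"
    using t0 n0 by (auto simp: Fc_def inner_commute)
  then have "infinite {n. t0 \<bullet> c n = h n}" using inf infinite_super by blast
  then have "\<exists>\<^sub>F n in sequentially. t0 \<bullet> c n = h n"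
    by (simp add: frequently_cofinite cofinite_eq_sequentially[symmetric])
  then show ?thesis using t0 by (auto simp: Fc_def)
qed

text \<open>The support function is convex, so it cannot rise above the linear function given by
  a common maximizer at both ends of a segment.\<close>
lemma support_function_eq_on_segment:
  fixes T :: "'a::real_inner set"
  assumes max: "\<And>d. is_max_val T (\<lambda>t. t \<bullet> d) (h d)"
    and t0: "t0 \<in> T" "t0 \<bullet> m = h m" "t0 \<bullet> (m + s *\<^sub>R d) = h (m + s *\<^sub>R d)"
    and x: "0 < x" "x \<le> s"
  shows "h (m + x *\<^sub>R d) = t0 \<bullet> (m + x *\<^sub>R d)"
proof (rule order_antisym)
  have le: "t \<bullet> e \<le> h e" if "t \<in> T" for t e using max[of e] that by (auto simp: is_max_val_def)
  obtain ts where ts: "ts \<in> T" "ts \<bullet> (m + x *\<^sub>R d) = h (m + x *\<^sub>R d)"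
    using max[of "m + x *\<^sub>R d"] by (auto simp: is_max_val_def)
  define \<theta> where "\<theta> = x / s"
  have \<theta>: "0 \<le> \<theta>" "\<theta> \<le> 1" "\<theta> * s = x" using x by (auto simp: \<theta>_def)
  have "h (m + x *\<^sub>R d) = ts \<bullet> m + (\<theta> * s) * (ts \<bullet> d)"
    using ts(2) \<theta>(3) by (simp add: inner_add_right)
  also have "\<dots> = (1 - \<theta>) * (ts \<bullet> m) + \<theta> * (ts \<bullet> (m + s *\<^sub>R d))"
    by (simp add: inner_add_right algebra_simps)
  also have "\<dots> \<le> (1 - \<theta>) * (t0 \<bullet> m) + \<theta> * (t0 \<bullet> (m + s *\<^sub>R d))"
    using \<theta> le[OF ts(1)] t0 by (intro add_mono mult_left_mono) auto
  also have "\<dots> = t0 \<bullet> m + (\<theta> * s) * (t0 \<bullet> d)"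
    by (simp add: inner_add_right algebra_simps)
  also have "\<dots> = t0 \<bullet> (m + x *\<^sub>R d)"
    using \<theta>(3) by (simp add: inner_add_right)
  finally show "h (m + x *\<^sub>R d) \<le> t0 \<bullet> (m + x *\<^sub>R d)" .
  show "t0 \<bullet> (m + x *\<^sub>R d) \<le> h (m + x *\<^sub>R d)" using le[OF t0(1)] .
qed

lemma support_frequent_maximizer:
  assumes max: "\<And>d. is_max_val T (\<lambda>t. t \<bullet> d) (h d)" and t0: "t0 \<in> T"
    and freq: "\<exists>\<^sub>F n in sequentially.
      t0 \<bullet> (m + (1 / real (Suc n)) *\<^sub>R d) = h (m + (1 / real (Suc n)) *\<^sub>R d)"
  shows "t0 \<bullet> m = h m" and "\<And>t. t \<in> T \<Longrightarrow> h m \<le> t \<bullet> m \<Longrightarrow> t \<bullet> d \<le> t0 \<bullet> d"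
proof -
  have le: "t \<bullet> e \<le> h e" if "t \<in> T" for t e using max[of e] that by (auto simp: is_max_val_def)
  have cmp: "\<exists>\<^sub>F n in sequentially. t \<bullet> m - t0 \<bullet> m \<le> (t0 \<bullet> d - t \<bullet> d) / real (Suc n)"
    if t: "t \<in> T" for t
    using freq
  proof (rule frequently_elim1)
    fix n assume "t0 \<bullet> (m + (1 / real (Suc n)) *\<^sub>R d) = h (m + (1 / real (Suc n)) *\<^sub>R d)"
    then show "t \<bullet> m - t0 \<bullet> m \<le> (t0 \<bullet> d - t \<bullet> d) / real (Suc n)"
      using le[OF t, of "m + (1 / real (Suc n)) *\<^sub>R d"]
      by (simp add: inner_add_right diff_divide_distrib)
  qed
  have "t \<bullet> m \<le> t0 \<bullet> m" if "t \<in> T" for t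
    using nonpos_if_frequently_le_inverse[OF cmp[OF that]] by simp
  moreover obtain t1 where "t1 \<in> T" "t1 \<bullet> m = h m" using max[of m] by (auto simp: is_max_val_def)
  ultimately show t0m: "t0 \<bullet> m = h m" using le[OF t0, of m] by force
  show "t \<bullet> d \<le> t0 \<bullet> d" if t: "t \<in> T" "h m \<le> t \<bullet> m" for t
  proof -
    obtain n where "t \<bullet> m - t0 \<bullet> m \<le> (t0 \<bullet> d - t \<bullet> d) / real (Suc n)"
      using frequently_ex[OF cmp[OF t(1)]] by blast
    moreover have "0 \<le> (t \<bullet> m - h m) * (1 + real n)" using t(2) by simp
    ultimately show ?thesis using t0m by (simp add: le_divide_eq)
  qed
qed

text \<open>Danskin's theorem for the support function of a polyhedron: since there are finitely many
  faces, a single maximizer serves along a whole segment \<open>m + [0, s] d\<close>.\<close>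
lemma polyhedron_support_has_dir_deriv:
  fixes T :: "'a::euclidean_space set"
  assumes T: "polyhedron T" and max: "\<And>d. is_max_val T (\<lambda>t. t \<bullet> d) (h d)"
  shows "\<exists>L. has_dir_deriv h m d L \<and> is_max_val {t\<in>T. h m \<le> t \<bullet> m} (\<lambda>t. t \<bullet> d) L"
proof -
  define s :: "nat \<Rightarrow> real" where "s n = 1 / real (Suc n)" for n
  obtain t0 where t0: "t0 \<in> T"
    and freq: "\<exists>\<^sub>F n in sequentially. t0 \<bullet> (m + s n *\<^sub>R d) = h (m + s n *\<^sub>R d)"
    using polyhedron_frequent_maximizer[OF T max, of "\<lambda>n. m + s n *\<^sub>R d"] by blast
  note t0m = support_frequent_maximizer(1)[OF max t0 freq[unfolded s_def]]
  note best = support_frequent_maximizer(2)[OF max t0 freq[unfolded s_def]]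
  obtain n0 where n0: "t0 \<bullet> (m + s n0 *\<^sub>R d) = h (m + s n0 *\<^sub>R d)"
    using frequently_ex[OF freq] by blast
  have "(h (m + x *\<^sub>R d) - h m) / x = t0 \<bullet> d" if x: "0 < x" "x < s n0" for x
  proof -
    have "h (m + x *\<^sub>R d) = t0 \<bullet> m + x * (t0 \<bullet> d)"
      using support_function_eq_on_segment[OF max t0 t0m n0] x by (simp add: inner_add_right)
    then show ?thesis using x t0m by simp
  qed
  then have "\<forall>\<^sub>F x in at_right 0. (h (m + x *\<^sub>R d) - h m) / x = t0 \<bullet> d"
    unfolding eventually_at_right_field by (intro exI[of _ "s n0"]) (simp add: s_def)
  then have "has_dir_deriv h m d (t0 \<bullet> d)"
    unfolding has_dir_deriv_def by (rule tendsto_eventually)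
  moreover have "is_max_val {t\<in>T. h m \<le> t \<bullet> m} (\<lambda>t. t \<bullet> d) (t0 \<bullet> d)"
    using t0 t0m best by (auto simp: is_max_val_def)
  ultimately show ?thesis by blast
qed

text \<open>Extending the segment from \<open>x\<close> through \<open>y\<close> by length \<open>r\<close> stays in the larger ball, and
  convexity along it bounds the slope by \<open>M / r\<close>.\<close>
lemma convex_on_ball_diff_le:
  fixes F :: "'a::real_normed_vector \<Rightarrow> real"
  assumes cv: "convex_on (ball x0 (2 * r)) F" and r: "0 < r"
    and bnd: "\<And>x y. x \<in> ball x0 (2 * r) \<Longrightarrow> y \<in> ball x0 (2 * r) \<Longrightarrow> F x - F y \<le> M"
    and x: "x \<in> ball x0 r" and y: "y \<in> ball x0 r"
  shows "F y - F x \<le> M / r * dist x y"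
proof (cases "x = y")
  case True
  then show ?thesis by simp
next
  case False
  define \<delta> where "\<delta> = norm (y - x)"
  have \<delta>: "0 < \<delta>" using False by (simp add: \<delta>_def)
  define z where "z = y + (r / \<delta>) *\<^sub>R (y - x)"
  have "norm ((r / \<delta>) *\<^sub>R (y - x)) = r" using \<delta> r by (simp add: \<delta>_def)
  then have "dist x0 z < 2 * r"
    using dist_triangle[of x0 z y] y by (simp add: z_def dist_norm)
  then have z2: "z \<in> ball x0 (2 * r)" by simp
  have xy2: "x \<in> ball x0 (2 * r)" "y \<in> ball x0 (2 * r)" using x y r by auto
  define \<theta> where "\<theta> = \<delta> / (\<delta> + r)"
  have \<theta>: "0 \<le> \<theta>" "\<theta> \<le> 1" "\<theta> \<le> \<delta> / r" using \<delta> r by (auto simp: \<theta>_def frac_le)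
  have "(1 - \<theta>) *\<^sub>R x + \<theta> *\<^sub>R z = x + (\<theta> * (1 + r / \<delta>)) *\<^sub>R (y - x)"
    by (simp add: z_def algebra_simps)
  also have "\<theta> * (1 + r / \<delta>) = 1"
    using \<delta> r add_pos_pos[of "\<delta> * \<delta>" "\<delta> * r"] by (simp add: \<theta>_def field_simps)
  finally have "y = (1 - \<theta>) *\<^sub>R x + \<theta> *\<^sub>R z" by simp
  then have "F y \<le> (1 - \<theta>) * F x + \<theta> * F z"
    using \<theta> xy2 z2 by (auto intro: convex_onD[OF cv])
  then have "F y - F x \<le> \<theta> * (F z - F x)" by (simp add: algebra_simps)
  also have "\<dots> \<le> \<theta> * M" using bnd[OF z2 xy2(1)] \<theta> by (intro mult_left_mono) auto
  also have "\<dots> \<le> \<delta> / r * M" using \<theta> bnd[OF xy2(1) xy2(1)] by (intro mult_right_mono) auto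
  also have "\<dots> = M / r * dist x y" by (simp add: \<delta>_def dist_norm norm_minus_commute)
  finally show ?thesis .
qed

lemma convex_on_bounded_imp_lipschitz_on_ball:
  fixes F :: "'a::real_normed_vector \<Rightarrow> real"
  assumes cv: "convex_on (ball x0 (2 * r)) F" and r: "0 < r"
    and bnd: "\<And>x y. x \<in> ball x0 (2 * r) \<Longrightarrow> y \<in> ball x0 (2 * r) \<Longrightarrow> F x - F y \<le> M"
  shows "(M / r)-lipschitz_on (ball x0 r) F"
proof (rule lipschitz_onI)
  fix x y assume "x \<in> ball x0 r" "y \<in> ball x0 r"
  then show "dist (F x) (F y) \<le> M / r * dist x y"
    using convex_on_ball_diff_le[OF cv r bnd, of x y] convex_on_ball_diff_le[OF cv r bnd, of y x]
    by (simp add: dist_real_def dist_commute abs_le_iff)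
next
  show "0 \<le> M / r" using bnd[of x0 x0] r by simp
qed

section \<open>Nested LPs and the LD-derivative\<close>

lemma polyhedron_slice:
  fixes C :: "('a::euclidean_space \<times> 'b::euclidean_space) set"
  assumes "polyhedron C"
  shows "polyhedron {t. (e, t) \<in> C}"
proof -
  obtain F where F: "finite F" "C = \<Inter>F" "\<forall>h\<in>F. \<exists>a b. a \<noteq> 0 \<and> h = {x. a \<bullet> x \<le> b}"
    using assms unfolding polyhedron_def by blast
  have slice: "polyhedron {t. (e, t) \<in> h}" if hF: "h \<in> F" for h
  proof -
    obtain a b where h: "h = {x. a \<bullet> x \<le> b}" using bspec[OF F(3) hF] by (elim exE conjE) simp
    obtain a1 a2 where a: "a = (a1, a2)" by (cases a)
    have "{t. (e, t) \<in> h} = {t. a2 \<bullet> t \<le> b - a1 \<bullet> e}"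
      unfolding h a by (simp add: algebra_simps)
    then show ?thesis by (simp add: polyhedron_halfspace_le)
  qed
  have "{t. (e, t) \<in> C} = \<Inter>((\<lambda>h. {t. (e, t) \<in> h}) ` F)" using F(2) by auto
  then show ?thesis using F(1) slice by (auto intro: polyhedron_Inter)
qed

lemma polyhedron_lp_dual_values:
  fixes AA :: "'k \<Rightarrow> 'w::euclidean_space" and Gra :: "'k \<Rightarrow> 'v::euclidean_space"
  assumes fin: "finite KA" "finite JB"
  shows "polyhedron (lin_comb KA JB Gra Grb ` {lam. lp_dualfeas KA JB AA BB e lam})"
proof -
  define C where "C = {lin_comb KA JB (\<lambda>k. (AA k, Gra k)) (\<lambda>j. (BB j, Grb j)) lam
      | lam. \<forall>k\<in>KA. fst lam k \<le> 0}"
  have "lin_comb KA JB Gra Grb ` {lam. lp_dualfeas KA JB AA BB e lam} = {t. (e, t) \<in> C}"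
  proof (intro set_eqI iffI)
    fix t assume "t \<in> lin_comb KA JB Gra Grb ` {lam. lp_dualfeas KA JB AA BB e lam}"
    then obtain lam where "lp_dualfeas KA JB AA BB e lam" "t = lin_comb KA JB Gra Grb lam" by blast
    then show "t \<in> {t. (e, t) \<in> C}"
      unfolding C_def lp_dualfeas_iff by (intro CollectI exI[of _ lam]) (simp add: lin_comb_Pair)
  next
    fix t assume "t \<in> {t. (e, t) \<in> C}"
    then obtain lam where lam: "\<forall>k\<in>KA. fst lam k \<le> 0" "lin_comb KA JB AA BB lam = e"
      and t: "t = lin_comb KA JB Gra Grb lam"
      by (auto simp: C_def lin_comb_Pair)
    show "t \<in> lin_comb KA JB Gra Grb ` {lam. lp_dualfeas KA JB AA BB e lam}"
      using lp_dualfeas_restrict_mult[OF lam(2,1)] t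
      by (intro image_eqI[of _ _ "restrict_mult KA JB lam"]) simp_all
  qed
  moreover have "polyhedron {t. (e, t) \<in> C}"
    unfolding C_def by (intro polyhedron_slice polyhedron_lin_comb_cone fin)
  ultimately show ?thesis by simp
qed

lemma is_max_val_image: "is_max_val (f ` S) c v \<longleftrightarrow> is_max_val S (\<lambda>x. c (f x)) v"
  by (auto simp: is_max_val_def)

lemma argmax_set_eq_is_max_val:
  assumes "is_max_val S c v"
  shows "argmax_set S c = {x\<in>S. v \<le> c x}"
  using assms by (force simp: argmax_set_def is_max_val_def)

lemma lp_feas_0: "lp_feas KA JB AA BB e Gra Grb ms \<phi> 0 = {lam. lp_dualfeas KA JB AA BB e lam}"
  by (simp add: lp_feas_def)

lemma lp_feas_Suc:
  "lp_feas KA JB AA BB e Gra Grb ms \<phi> (Suc j)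
     = {lam \<in> lp_feas KA JB AA BB e Gra Grb ms \<phi> j.
        \<phi> j (ms ! j) \<le> lp_obj KA JB Gra Grb lam (ms ! j)}"
proof -
  have "{1..Suc j} = insert (Suc j) {1..j}" by auto
  then show ?thesis by (auto simp: lp_feas_def)
qed

lemma lp_feas_antimono:
  "i \<le> j \<Longrightarrow> lp_feas KA JB AA BB e Gra Grb ms \<phi> j \<subseteq> lp_feas KA JB AA BB e Gra Grb ms \<phi> i"
  by (induction j rule: dec_induct) (auto simp: lp_feas_Suc)

lemma lin_comb_image_lp_feas_Suc:
  "lin_comb KA JB Gra Grb ` lp_feas KA JB AA BB e Gra Grb ms \<phi> (Suc j)
     = lin_comb KA JB Gra Grb ` lp_feas KA JB AA BB e Gra Grb ms \<phi> j
       \<inter> {t. \<phi> j (ms ! j) \<le> t \<bullet> (ms ! j)}"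
  unfolding lp_feas_Suc lp_obj_eq_inner by blast

lemma polyhedron_lp_feas_values:
  fixes AA :: "'k \<Rightarrow> 'w::euclidean_space" and Gra :: "'k \<Rightarrow> 'v::euclidean_space"
  assumes "finite KA" "finite JB"
  shows "polyhedron (lin_comb KA JB Gra Grb ` lp_feas KA JB AA BB e Gra Grb ms \<phi> j)"
proof (induction j)
  case 0
  then show ?case using polyhedron_lp_dual_values[OF assms] by (simp add: lp_feas_0)
next
  case (Suc j)
  have "polyhedron {t. \<phi> j (ms ! j) \<le> t \<bullet> (ms ! j)}"
    using polyhedron_halfspace_ge[where a = "ms ! j"] by (simp add: inner_commute)
  then show ?case unfolding lin_comb_image_lp_feas_Suc using Suc.IH by (intro polyhedron_Int)
qed

text \<open>Each step of the homogenization sequence is Danskin's theorem for the polyhedron of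
  objective vectors \<open>lin_comb KA JB Gra Grb \<lambda>\<close> of the feasible multipliers.\<close>
lemma ld_seq_nested_lps:
  fixes v :: "'v::euclidean_space \<Rightarrow> real" and AA :: "'k \<Rightarrow> 'w::euclidean_space"
    and ms :: "'v list"
  assumes fin: "finite KA" "finite JB"
    and deriv: "\<And>d. \<exists>L. has_dir_deriv v x d L \<and>
      is_max_val {lam. lp_dualfeas KA JB AA BB e lam} (\<lambda>lam. lp_obj KA JB Gra Grb lam d) L"
  defines "F \<equiv> lp_feas KA JB AA BB e Gra Grb ms (ld_seq v x ms)"
  shows "is_max_val (F j) (\<lambda>lam. lp_obj KA JB Gra Grb lam d) (ld_seq v x ms j d)"
    and "\<exists>L. has_dir_deriv (ld_seq v x ms j) (ms ! j) d L"
proof -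
  let ?G = "lin_comb KA JB Gra Grb"
  have step: "\<exists>L. has_dir_deriv (ld_seq v x ms j) (ms ! j) d L \<and>
      is_max_val (F (Suc j)) (\<lambda>lam. lp_obj KA JB Gra Grb lam d) L"
    if IH: "\<And>d. is_max_val (F j) (\<lambda>lam. lp_obj KA JB Gra Grb lam d) (ld_seq v x ms j d)" for j d
  proof -
    have "is_max_val (?G ` F j) (\<lambda>t. t \<bullet> d') (ld_seq v x ms j d')" for d'
      using IH[of d'] by (simp add: is_max_val_image lp_obj_eq_inner)
    moreover have "polyhedron (?G ` F j)"
      unfolding F_def by (rule polyhedron_lp_feas_values[OF fin])
    ultimately
    obtain L where "has_dir_deriv (ld_seq v x ms j) (ms ! j) d L"
      "is_max_val (?G ` F (Suc j)) (\<lambda>t. t \<bullet> d) L"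
      using polyhedron_support_has_dir_deriv
      unfolding F_def lin_comb_image_lp_feas_Suc Int_def by fastforce
    then show ?thesis by (auto simp: is_max_val_image lp_obj_eq_inner)
  qed
  have max: "is_max_val (F j) (\<lambda>lam. lp_obj KA JB Gra Grb lam d) (ld_seq v x ms j d)" for j d
  proof (induction j arbitrary: d)
    case 0
    obtain L where L: "has_dir_deriv v x d L"
      "is_max_val {lam. lp_dualfeas KA JB AA BB e lam} (\<lambda>lam. lp_obj KA JB Gra Grb lam d) L"
      using deriv by blast
    have "ld_seq v x ms 0 d = L" using dir_deriv_eqI[OF L(1)] by simp
    then show ?case using L(2) by (simp add: F_def lp_feas_0)
  next
    case (Suc j)
    obtain L where L: "has_dir_deriv (ld_seq v x ms j) (ms ! j) d L"
      "is_max_val (F (Suc j)) (\<lambda>lam. lp_obj KA JB Gra Grb lam d) L"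
      using step[OF Suc.IH] by blast
    have "ld_seq v x ms (Suc j) d = L" using dir_deriv_eqI[OF L(1)] by simp
    then show ?case using L(2) by simp
  qed
  then show "is_max_val (F j) (\<lambda>lam. lp_obj KA JB Gra Grb lam d) (ld_seq v x ms j d)" .
  show "\<exists>L. has_dir_deriv (ld_seq v x ms j) (ms ! j) d L" using step[OF max] by blast
qed

lemma argmax_lp_feas:
  assumes "is_max_val (lp_feas KA JB AA BB e Gra Grb ms \<phi> j)
    (\<lambda>lam. lp_obj KA JB Gra Grb lam (ms ! j)) (\<phi> j (ms ! j))"
  shows "argmax_set (lp_feas KA JB AA BB e Gra Grb ms \<phi> j) (\<lambda>lam. lp_obj KA JB Gra Grb lam (ms ! j))
    = lp_feas KA JB AA BB e Gra Grb ms \<phi> (Suc j)"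
  unfolding argmax_set_eq_is_max_val[OF assms] by (simp add: lp_feas_Suc)

lemma lp_obj_eq_of_lp_feas:
  assumes max: "\<And>j d. is_max_val (lp_feas KA JB AA BB e Gra Grb ms \<phi> j)
      (\<lambda>lam. lp_obj KA JB Gra Grb lam d) (\<phi> j d)"
    and lam: "lam \<in> lp_feas KA JB AA BB e Gra Grb ms \<phi> n" and q: "q < n"
  shows "lp_obj KA JB Gra Grb lam (ms ! q) = \<phi> q (ms ! q)"
proof (rule order_antisym)
  have "lp_feas KA JB AA BB e Gra Grb ms \<phi> n \<subseteq> lp_feas KA JB AA BB e Gra Grb ms \<phi> (Suc q)"
    using q by (intro lp_feas_antimono) simp
  with lam have "lam \<in> lp_feas KA JB AA BB e Gra Grb ms \<phi> (Suc q)" by blast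
  then have "lam \<in> lp_feas KA JB AA BB e Gra Grb ms \<phi> q"
    and "\<phi> q (ms ! q) \<le> lp_obj KA JB Gra Grb lam (ms ! q)"
    by (simp_all add: lp_feas_Suc)
  then show "lp_obj KA JB Gra Grb lam (ms ! q) \<le> \<phi> q (ms ! q)"
    and "\<phi> q (ms ! q) \<le> lp_obj KA JB Gra Grb lam (ms ! q)"
    using max[of q "ms ! q"] by (auto simp: is_max_val_def)
qed

lemma ld_deriv_nested_lps:
  fixes v :: "'v::euclidean_space \<Rightarrow> real" and AA :: "'k \<Rightarrow> 'w::euclidean_space"
  assumes fin: "finite KA" "finite JB"
    and deriv: "\<And>d. \<exists>L. has_dir_deriv v x d L \<and>
      is_max_val {lam. lp_dualfeas KA JB AA BB e lam} (\<lambda>lam. lp_obj KA JB Gra Grb lam d) L"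
  shows "let \<phi> = ld_seq v x ms;
          F = lp_feas KA JB AA BB e Gra Grb ms \<phi>;
          D = (\<lambda>j. argmax_set (F j) (\<lambda>lam. lp_obj KA JB Gra Grb lam (ms ! j)))
      in (\<forall>j \<le> length ms. \<forall>d. is_max_val (F j) (\<lambda>lam. lp_obj KA JB Gra Grb lam d) (\<phi> j d)) \<and>
         (\<forall>j \<in> {1..<length ms}.
            D j = argmax_set (D (j - 1)) (\<lambda>lam. lp_obj KA JB Gra Grb lam (ms ! j)) \<and>
            D j \<subseteq> D (j - 1)) \<and>
         (ms \<noteq> [] \<longrightarrow> (\<forall>lam \<in> D (length ms - 1).
            ld_deriv v x ms = map (\<lambda>q. lp_obj KA JB Gra Grb lam (ms ! q)) [0..<length ms]))"
proof -
  define F where "F = lp_feas KA JB AA BB e Gra Grb ms (ld_seq v x ms)"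
  have max: "is_max_val (F j) (\<lambda>lam. lp_obj KA JB Gra Grb lam d) (ld_seq v x ms j d)" for j d
    unfolding F_def by (rule ld_seq_nested_lps(1)[OF fin deriv])
  have D: "argmax_set (F j) (\<lambda>lam. lp_obj KA JB Gra Grb lam (ms ! j)) = F (Suc j)" for j
    unfolding F_def by (rule argmax_lp_feas[OF max[unfolded F_def]])
  show ?thesis
    unfolding Let_def F_def[symmetric] D
  proof (intro conjI impI ballI)
    show "\<forall>j\<le>length ms. \<forall>d. is_max_val (F j) (\<lambda>lam. lp_obj KA JB Gra Grb lam d) (ld_seq v x ms j d)"
      using max by blast
    fix j assume "j \<in> {1..<length ms}"
    then have "Suc (j - 1) = j" by simp
    then show "F (Suc j) = argmax_set (F (Suc (j - 1))) (\<lambda>lam. lp_obj KA JB Gra Grb lam (ms ! j))"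
      and "F (Suc j) \<subseteq> F (Suc (j - 1))"
      using D[of j] lp_feas_antimono[of j "Suc j"] by (simp_all add: F_def)
  next
    fix lam assume "ms \<noteq> []" "lam \<in> F (Suc (length ms - 1))"
    then have "lam \<in> F (length ms)" by simp
    then show "ld_deriv v x ms = map (\<lambda>q. lp_obj KA JB Gra Grb lam (ms ! q)) [0..<length ms]"
      using lp_obj_eq_of_lp_feas[OF max[unfolded F_def]] by (simp add: ld_deriv_def F_def)
  qed
qed

section \<open>Sensitivity of a convex parametric program\<close>

locale convex_parametric_program =
  fixes v :: "real^'p::finite \<Rightarrow> real"
    and f :: "(real^'x::finite) \<times> (real^'p) \<Rightarrow> real^'x" and Ih :: "'x set"
    and g :: "('x, 'l) gidx \<Rightarrow> (real^'x) \<times> (real^'p) \<Rightarrow> real" and K :: "('x, 'l) gidx set"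
    and X :: "(real^'x) set" and P N :: "(real^'p) set"
    and i :: 'x and ph :: "real^'p" and \<xi>h :: "real^'x"
  assumes finite_K: "finite K"
    and bounded_X: "bounded X"
    and red_feas_subset: "\<And>p. red_feas f Ih g K p \<subseteq> X"
    and g_convex: "\<And>k. k \<in> K \<Longrightarrow> convex_on (X \<times> P) (g k)"
    and g_differentiable: "\<And>k. k \<in> K \<Longrightarrow> g k differentiable (at (\<xi>h, ph))"
    and h_affine: "\<And>j. j \<in> Ih \<Longrightarrow> affine_fun (\<lambda>z. f z $ j)"
    and N: "open N" "ph \<in> N" "N \<subseteq> P"
    and value_eq: "\<And>p. p \<in> N \<Longrightarrow> v p = Inf ((\<lambda>\<xi>. \<xi> $ i) ` red_feas f Ih g K p)"
    and slater: "\<And>p. p \<in> N \<Longrightarrow> \<exists>\<xi>. (\<forall>j\<in>Ih. f (\<xi>, p) $ j = 0) \<and> (\<forall>k\<in>K. g k (\<xi>, p) < 0)"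
    and optimal: "\<xi>h \<in> red_feas f Ih g K ph" "\<And>\<xi>. \<xi> \<in> red_feas f Ih g K ph \<Longrightarrow> \<xi>h $ i \<le> \<xi> $ i"
begin

text \<open>The linearization at the optimum \<open>(\<xi>h, ph)\<close>: the rows of \<open>A\<close>, \<open>G\<^sup>A\<close> (over the active
  constraints) and of \<open>B\<close>, \<open>G\<^sup>B\<close>.\<close>

abbreviation "active \<equiv> {k \<in> K. g k (\<xi>h, ph) = 0}"
abbreviation "Ag \<equiv> \<lambda>k. gradx (g k) (\<xi>h, ph)"
abbreviation "Gg \<equiv> \<lambda>k. - grady (g k) (\<xi>h, ph)"
abbreviation "Bh \<equiv> \<lambda>j. gradx (\<lambda>z. f z $ j) (\<xi>h, ph)"
abbreviation "Gh \<equiv> \<lambda>j. - grady (\<lambda>z. f z $ j) (\<xi>h, ph)"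

lemma finite_active: "finite active"
  using finite_K by simp

lemma optimal_in_X: "\<xi>h \<in> X"
  using optimal(1) red_feas_subset by blast

lemma g_has_derivative:
  assumes "k \<in> K"
  shows "(g k has_derivative (\<lambda>z. Ag k \<bullet> fst z - Gg k \<bullet> snd z)) (at (\<xi>h, ph))"
proof -
  obtain G' where G': "(g k has_derivative G') (at (\<xi>h, ph))"
    using g_differentiable[OF assms] by (auto simp: differentiable_def)
  moreover have "G' = (\<lambda>z. Ag k \<bullet> fst z - Gg k \<bullet> snd z)"
  proof
    fix z :: "(real^'x) \<times> (real^'p)"
    show "G' z = Ag k \<bullet> fst z - Gg k \<bullet> snd z"
      using has_derivative_partial_gradients[OF G', of "fst z" "snd z"] by simp
  qed
  ultimately show ?thesis by simp
qed

lemma g_gradient_ineq: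
  assumes "k \<in> K" "\<xi> \<in> X" "p \<in> P"
  shows "g k (\<xi>h, ph) + Ag k \<bullet> (\<xi> - \<xi>h) - Gg k \<bullet> (p - ph) \<le> g k (\<xi>, p)"
  using convex_on_has_derivative_ge[OF g_convex[OF assms(1)] _ _ g_has_derivative[OF assms(1)],
      of "(\<xi>, p)"]
    assms optimal_in_X N by auto

lemma h_linear:
  assumes "j \<in> Ih"
  shows "f (\<xi>, p) $ j = f (\<xi>h, ph) $ j + Bh j \<bullet> (\<xi> - \<xi>h) - Gh j \<bullet> (p - ph)"
proof -
  obtain a b c where abc: "\<And>\<xi> p. f (\<xi>, p) $ j = a \<bullet> \<xi> + b \<bullet> p + c"
    using h_affine[OF assms] unfolding affine_fun_def by blast
  then have "(\<lambda>z. f z $ j) = (\<lambda>z. a \<bullet> fst z + b \<bullet> snd z + c)"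
    by (metis prod.collapse)
  moreover have "((\<lambda>z. a \<bullet> fst z + b \<bullet> snd z + c) has_derivative
      (\<lambda>z. a \<bullet> fst z + b \<bullet> snd z + 0)) (at (\<xi>h, ph))"
    by (intro has_derivative_add has_derivative_const
        bounded_linear.has_derivative[OF bounded_linear_inner_right
          has_derivative_fst[OF has_derivative_ident]]
        bounded_linear.has_derivative[OF bounded_linear_inner_right
          has_derivative_snd[OF has_derivative_ident]])
  ultimately have "a \<bullet> u + b \<bullet> q = Bh j \<bullet> u - Gh j \<bullet> q" for u q
    using has_derivative_partial_gradients[of "\<lambda>z. f z $ j", of _ "(\<xi>h, ph)" u q] by simp
  then show ?thesis using abc by (simp add: inner_diff_right)
qed

lemma X_component_bound:
  obtains B where "\<And>\<xi>. \<xi> \<in> X \<Longrightarrow> \<bar>\<xi> $ i\<bar> \<le> B"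
proof -
  obtain B where B: "\<forall>\<xi>\<in>X. norm \<xi> \<le> B" using bounded_X by (auto simp: bounded_iff)
  have "\<bar>\<xi> $ i\<bar> \<le> B" if "\<xi> \<in> X" for \<xi>
    using component_le_norm_cart[of \<xi> i] B that by force
  then show thesis by (rule that)
qed

lemma feasible_nonempty:
  assumes "p \<in> N"
  shows "red_feas f Ih g K p \<noteq> {}"
  using slater[OF assms] by (force simp: red_feas_def)

lemma value_le:
  assumes "p \<in> N" "\<xi> \<in> red_feas f Ih g K p"
  shows "v p \<le> \<xi> $ i"
proof -
  obtain B where "\<And>\<xi>. \<xi> \<in> X \<Longrightarrow> \<bar>\<xi> $ i\<bar> \<le> B" using X_component_bound by blast
  then have "bdd_below ((\<lambda>\<xi>. \<xi> $ i) ` red_feas f Ih g K p)"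
    using red_feas_subset by (intro bdd_belowI2[of _ "- B"]) (force simp: abs_le_iff)
  then show ?thesis using assms by (simp add: value_eq cInf_lower)
qed

lemma value_ge:
  assumes "p \<in> N" "\<And>\<xi>. \<xi> \<in> red_feas f Ih g K p \<Longrightarrow> c \<le> \<xi> $ i"
  shows "c \<le> v p"
  unfolding value_eq[OF assms(1)] using assms(2) feasible_nonempty[OF assms(1)]
  by (intro cInf_greatest) auto

lemma value_at_optimum: "v ph = \<xi>h $ i"
  using value_le[OF N(2) optimal(1)] value_ge[OF N(2) optimal(2)] by simp

lemma value_approx:
  assumes "p \<in> N" "0 < \<epsilon>"
  obtains \<xi> where "\<xi> \<in> red_feas f Ih g K p" "\<xi> $ i < v p + \<epsilon>"
proof -
  have "Inf ((\<lambda>\<xi>. \<xi> $ i) ` red_feas f Ih g K p) < v p + \<epsilon>" using assms by (simp add: value_eq)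
  then have "\<exists>y \<in> (\<lambda>\<xi>. \<xi> $ i) ` red_feas f Ih g K p. y < v p + \<epsilon>"
    using feasible_nonempty[OF assms(1)] by (intro cInf_lessD) auto
  then show thesis using that by blast
qed

lemma feasible_diff_in_primal:
  assumes "p \<in> P" "\<xi> \<in> red_feas f Ih g K p"
  shows "\<xi> - \<xi>h \<in> lp_primal active Ih Ag Bh Gg Gh (p - ph)"
  unfolding lp_primal_def
proof (intro CollectI conjI ballI)
  fix k assume "k \<in> active"
  then show "Ag k \<bullet> (\<xi> - \<xi>h) \<le> Gg k \<bullet> (p - ph)"
    using g_gradient_ineq[of k \<xi> p] assms red_feas_subset by (force simp: red_feas_def)
next
  fix j assume "j \<in> Ih"
  then show "Bh j \<bullet> (\<xi> - \<xi>h) = Gh j \<bullet> (p - ph)"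
    using h_linear[of j \<xi> p] assms optimal(1) by (simp add: red_feas_def)
qed

text \<open>Weak duality for the linearized program, whose feasible set contains the differences
  of feasible points by convexity.\<close>
lemma value_lower_bound:
  assumes lam: "lp_dualfeas active Ih Ag Bh (axis i 1) lam" and p: "p \<in> N"
  shows "v ph + lp_obj active Ih Gg Gh lam (p - ph) \<le> v p"
proof (rule value_ge[OF p])
  fix \<xi> assume "\<xi> \<in> red_feas f Ih g K p"
  then have "lp_obj active Ih Gg Gh lam (p - ph) \<le> axis i 1 \<bullet> (\<xi> - \<xi>h)"
    using p N(3) by (intro lp_weak_duality[OF lam] feasible_diff_in_primal) auto
  then show "v ph + lp_obj active Ih Gg Gh lam (p - ph) \<le> \<xi> $ i"
    by (simp add: value_at_optimum inner_axis')
qed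

lemma slater_direction:
  obtains z where "\<And>k. k \<in> active \<Longrightarrow> Ag k \<bullet> z < 0" "\<And>j. j \<in> Ih \<Longrightarrow> Bh j \<bullet> z = 0"
proof -
  obtain \<xi>s where h: "\<forall>j\<in>Ih. f (\<xi>s, ph) $ j = 0" and g: "\<forall>k\<in>K. g k (\<xi>s, ph) < 0"
    using slater[OF N(2)] by blast
  then have "\<xi>s \<in> X" using red_feas_subset by (force simp: red_feas_def)
  then show thesis
    using that[of "\<xi>s - \<xi>h"] g_gradient_ineq[of _ \<xi>s ph] g h h_linear[of _ \<xi>s ph] optimal(1) N
    by (force simp: red_feas_def)
qed

lemma eventually_in_N: "\<forall>\<^sub>F t in at_right 0. ph + t *\<^sub>R d \<in> N"
proof -
  have "((\<lambda>t. ph + t *\<^sub>R d) \<longlongrightarrow> ph) (at_right 0)"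
    by (auto intro!: tendsto_eq_intros)
  then show ?thesis using N(1,2) by (rule topological_tendstoD)
qed

lemma eventually_strictly_feasible:
  assumes "\<And>k. k \<in> active \<Longrightarrow> Ag k \<bullet> w < Gg k \<bullet> d"
  shows "\<forall>\<^sub>F t in at_right 0. \<forall>k\<in>K. g k (\<xi>h + t *\<^sub>R w, ph + t *\<^sub>R d) < 0"
  using finite_K
proof (rule eventually_ball_finite, intro ballI)
  fix k assume k: "k \<in> K"
  have lim: "((\<lambda>t. (g k (\<xi>h + t *\<^sub>R w, ph + t *\<^sub>R d) - g k (\<xi>h, ph)) / t)
      \<longlongrightarrow> Ag k \<bullet> w - Gg k \<bullet> d) (at_right 0)"
    using has_derivative_imp_has_dir_deriv[OF g_has_derivative[OF k], of "(w, d)"]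
    by (simp add: has_dir_deriv_def)
  show "\<forall>\<^sub>F t in at_right 0. g k (\<xi>h + t *\<^sub>R w, ph + t *\<^sub>R d) < 0"
  proof (cases "k \<in> active")
    case True
    then have "\<forall>\<^sub>F t in at_right 0. (g k (\<xi>h + t *\<^sub>R w, ph + t *\<^sub>R d) - g k (\<xi>h, ph)) / t < 0"
      using assms[OF True] by (intro order_tendstoD(2)[OF lim]) simp
    then have "\<forall>\<^sub>F t in at_right 0. g k (\<xi>h + t *\<^sub>R w, ph + t *\<^sub>R d) / t < 0"
      using True by simp
    then show ?thesis using eventually_at_right_less[of "0::real"]
      by eventually_elim (simp add: divide_less_0_iff)
  next
    case False
    then have "g k (\<xi>h, ph) < 0" using optimal(1) k by (force simp: red_feas_def)
    moreover have "((\<lambda>t. g k (\<xi>h + t *\<^sub>R w, ph + t *\<^sub>R d)) \<longlongrightarrow> g k (\<xi>h, ph)) (at_right 0)"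
    proof (rule isCont_tendsto_compose[of _ "g k"])
      show "isCont (g k) (\<xi>h, ph)" using g_has_derivative[OF k] by (rule has_derivative_continuous)
      show "((\<lambda>t. (\<xi>h + t *\<^sub>R w, ph + t *\<^sub>R d)) \<longlongrightarrow> (\<xi>h, ph)) (at_right 0)"
        by (auto intro!: tendsto_eq_intros)
    qed
    ultimately show ?thesis by (intro order_tendstoD(2)) auto
  qed
qed

text \<open>Adding a small multiple of the Slater direction makes a solution of the linearized
  program strictly feasible, so the ray \<open>\<xi>h + t w\<close> stays feasible for small \<open>t\<close>.\<close>
lemma value_upper_bound:
  assumes w: "w \<in> lp_primal active Ih Ag Bh Gg Gh d" and \<eta>: "0 < \<eta>"
  shows "\<forall>\<^sub>F t in at_right 0. v (ph + t *\<^sub>R d) \<le> v ph + t * (w $ i + \<eta>)"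
proof -
  obtain z where zA: "\<And>k. k \<in> active \<Longrightarrow> Ag k \<bullet> z < 0" and zB: "\<And>j. j \<in> Ih \<Longrightarrow> Bh j \<bullet> z = 0"
    using slater_direction by blast
  define \<epsilon> where "\<epsilon> = \<eta> / (\<bar>z $ i\<bar> + 1)"
  have \<epsilon>: "0 < \<epsilon>" using \<eta> by (simp add: \<epsilon>_def add_pos_nonneg)
  have "\<epsilon> * z $ i \<le> \<epsilon> * (\<bar>z $ i\<bar> + 1)" using \<epsilon> by (intro mult_left_mono) auto
  then have \<epsilon>_z: "\<epsilon> * z $ i \<le> \<eta>" by (simp add: \<epsilon>_def)
  define w' where "w' = w + \<epsilon> *\<^sub>R z"
  have w'_strict: "Ag k \<bullet> w' < Gg k \<bullet> d" if k: "k \<in> active" for k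
  proof -
    have "\<epsilon> * (Ag k \<bullet> z) < 0" using mult_pos_neg[OF \<epsilon> zA[OF k]] .
    moreover have "Ag k \<bullet> w \<le> Gg k \<bullet> d" using w k by (simp add: lp_primal_def)
    ultimately show ?thesis by (simp add: w'_def inner_add_right)
  qed
  have "\<forall>\<^sub>F t in at_right 0. \<forall>k\<in>K. g k (\<xi>h + t *\<^sub>R w', ph + t *\<^sub>R d) < 0"
    using w'_strict by (rule eventually_strictly_feasible)
  then show ?thesis
    using eventually_in_N[of d] eventually_at_right_less[of "0::real"]
  proof eventually_elim
    case (elim t)
    have "\<xi>h + t *\<^sub>R w' \<in> red_feas f Ih g K (ph + t *\<^sub>R d)"
      unfolding red_feas_def
    proof (intro CollectI conjI ballI)
      fix j assume j: "j \<in> Ih"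
      then have "Bh j \<bullet> w' = Gh j \<bullet> d"
        using w zB by (simp add: w'_def lp_primal_def inner_add_right)
      then show "f (\<xi>h + t *\<^sub>R w', ph + t *\<^sub>R d) $ j = 0"
        using h_linear[OF j] optimal(1) j by (simp add: red_feas_def)
    qed (use elim less_imp_le in blast)
    then have "v (ph + t *\<^sub>R d) \<le> (\<xi>h + t *\<^sub>R w') $ i" using elim by (intro value_le)
    also have "\<dots> = v ph + t * (w $ i + \<epsilon> * z $ i)"
      by (simp add: value_at_optimum w'_def algebra_simps)
    also have "\<dots> \<le> v ph + t * (w $ i + \<eta>)"
      using \<epsilon>_z elim by (intro add_left_mono mult_left_mono) auto
    finally show ?case .
  qed
qed

lemma recession_nonneg:
  assumes "\<forall>k\<in>active. Ag k \<bullet> w \<le> 0" "\<forall>j\<in>Ih. Bh j \<bullet> w = 0"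
  shows "0 \<le> axis i 1 \<bullet> w"
proof (rule ccontr)
  assume "\<not> 0 \<le> axis i 1 \<bullet> w"
  then have neg: "w $ i < 0" by (simp add: inner_axis')
  have "w \<in> lp_primal active Ih Ag Bh Gg Gh 0" using assms by (simp add: lp_primal_def)
  from value_upper_bound[OF this, of "- w $ i / 2"]
  have "\<forall>\<^sub>F t in at_right 0. v ph \<le> v ph + t * (w $ i / 2)" using neg by simp
  then have "\<forall>\<^sub>F t in at_right (0::real). False"
    using eventually_at_right_less[of "0::real"]
  proof eventually_elim
    case (elim t)
    then show False using mult_pos_neg[of t "w $ i"] neg by simp
  qed
  then show False by simp
qed

lemma primal_feasible: "lp_primal active Ih Ag Bh Gg Gh d \<noteq> {}"
proof -
  have "\<forall>\<^sub>F t in at_right 0. 0 < t \<and> ph + t *\<^sub>R d \<in> N"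
    using eventually_at_right_less eventually_in_N by (rule eventually_conj)
  then obtain t where t: "0 < t" "ph + t *\<^sub>R d \<in> N"
    using eventually_happens'[OF trivial_limit_at_right_real] by blast
  obtain \<xi> where "\<forall>j\<in>Ih. f (\<xi>, ph + t *\<^sub>R d) $ j = 0" "\<forall>k\<in>K. g k (\<xi>, ph + t *\<^sub>R d) < 0"
    using slater[OF t(2)] by blast
  then have "\<xi> \<in> red_feas f Ih g K (ph + t *\<^sub>R d)" by (force simp: red_feas_def)
  then have "\<xi> - \<xi>h \<in> lp_primal active Ih Ag Bh Gg Gh ((ph + t *\<^sub>R d) - ph)"
    using t(2) N(3) by (intro feasible_diff_in_primal) auto
  then have "t *\<^sub>R ((1 / t) *\<^sub>R (\<xi> - \<xi>h)) \<in> lp_primal active Ih Ag Bh Gg Gh (t *\<^sub>R d)"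
    using t(1) by simp
  then show ?thesis using lp_primal_scaleR[OF t(1)] by blast
qed

lemma has_dir_deriv_value:
  "\<exists>L. has_dir_deriv v ph d L \<and>
     is_max_val {lam. lp_dualfeas active Ih Ag Bh (axis i 1) lam}
       (\<lambda>lam. lp_obj active Ih Gg Gh lam d) L"
proof -
  let ?W = "lp_primal active Ih Ag Bh Gg Gh d"
  define L where "L = Inf ((\<bullet>) (axis i 1) ` ?W)"
  have max: "is_max_val {lam. lp_dualfeas active Ih Ag Bh (axis i 1) lam}
      (\<lambda>lam. lp_obj active Ih Gg Gh lam d) L"
    unfolding L_def using finite_active primal_feasible recession_nonneg
    by (intro lp_strong_duality) auto
  then obtain lam where lam: "lp_dualfeas active Ih Ag Bh (axis i 1) lam"
    "lp_obj active Ih Gg Gh lam d = L"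
    by (auto simp: is_max_val_def)
  have "has_dir_deriv v ph d L"
    unfolding has_dir_deriv_def
  proof (rule tendstoI)
    fix \<epsilon> :: real assume \<epsilon>: "0 < \<epsilon>"
    obtain w where w: "w \<in> ?W" "axis i 1 \<bullet> w < L + \<epsilon> / 2"
      using cInf_lessD[of "(\<bullet>) (axis i 1) ` ?W" "L + \<epsilon> / 2"] primal_feasible \<epsilon> by (auto simp: L_def)
    show "\<forall>\<^sub>F t in at_right 0. dist ((v (ph + t *\<^sub>R d) - v ph) / t) L < \<epsilon>"
      using value_upper_bound[OF w(1) half_gt_zero[OF \<epsilon>]] eventually_in_N[of d]
        eventually_at_right_less[of "0::real"]
    proof eventually_elim
      case (elim t)
      have "v ph + t * L \<le> v (ph + t *\<^sub>R d)"
        using value_lower_bound[OF lam(1) elim(2)] lam(2) by (simp add: lp_obj_scaleR)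
      then have "L \<le> (v (ph + t *\<^sub>R d) - v ph) / t" using elim(3) by (simp add: field_simps)
      moreover have "(v (ph + t *\<^sub>R d) - v ph) / t \<le> w $ i + \<epsilon> / 2"
        using elim(1,3) by (simp add: field_simps)
      ultimately show ?case using w(2) by (simp add: dist_real_def inner_axis')
    qed
  qed
  with max show ?thesis by blast
qed

lemma red_feas_convex_comb:
  assumes "\<xi>1 \<in> red_feas f Ih g K p1" "\<xi>2 \<in> red_feas f Ih g K p2" "p1 \<in> P" "p2 \<in> P"
    and t: "0 \<le> t" "t \<le> 1"
  shows "(1 - t) *\<^sub>R \<xi>1 + t *\<^sub>R \<xi>2 \<in> red_feas f Ih g K ((1 - t) *\<^sub>R p1 + t *\<^sub>R p2)"
  unfolding red_feas_def
proof (intro CollectI conjI ballI)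
  fix j assume j: "j \<in> Ih"
  have "f (\<xi>1, p1) $ j = 0" "f (\<xi>2, p2) $ j = 0" using assms(1,2) j by (simp_all add: red_feas_def)
  moreover have "f ((1 - t) *\<^sub>R \<xi>1 + t *\<^sub>R \<xi>2, (1 - t) *\<^sub>R p1 + t *\<^sub>R p2) $ j
      = (1 - t) * f (\<xi>1, p1) $ j + t * f (\<xi>2, p2) $ j"
    unfolding h_linear[OF j, of "(1 - t) *\<^sub>R \<xi>1 + t *\<^sub>R \<xi>2"] h_linear[OF j, of \<xi>1 p1]
      h_linear[OF j, of \<xi>2 p2]
    by (simp add: inner_diff_right inner_add_right algebra_simps)
  ultimately show "f ((1 - t) *\<^sub>R \<xi>1 + t *\<^sub>R \<xi>2, (1 - t) *\<^sub>R p1 + t *\<^sub>R p2) $ j = 0"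
    by simp
next
  fix k assume k: "k \<in> K"
  have "(\<xi>1, p1) \<in> X \<times> P" "(\<xi>2, p2) \<in> X \<times> P" using assms red_feas_subset by blast+
  from convex_onD[OF g_convex[OF k] t this]
  have "g k ((1 - t) *\<^sub>R \<xi>1 + t *\<^sub>R \<xi>2, (1 - t) *\<^sub>R p1 + t *\<^sub>R p2)
      \<le> (1 - t) * g k (\<xi>1, p1) + t * g k (\<xi>2, p2)"
    by simp
  also have "\<dots> \<le> 0"
    using assms(1,2) k t by (intro add_nonpos_nonpos mult_nonneg_nonpos) (auto simp: red_feas_def)
  finally show "g k ((1 - t) *\<^sub>R \<xi>1 + t *\<^sub>R \<xi>2, (1 - t) *\<^sub>R p1 + t *\<^sub>R p2) \<le> 0" .
qed

lemma value_convex_on: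
  assumes C: "convex C" "C \<subseteq> N"
  shows "convex_on C v"
proof (rule convex_onI[OF _ C(1)])
  fix t :: real and x y assume t: "0 < t" "t < 1" and x: "x \<in> C" and y: "y \<in> C"
  show "v ((1 - t) *\<^sub>R x + t *\<^sub>R y) \<le> (1 - t) * v x + t * v y"
  proof (rule field_le_epsilon)
    fix \<epsilon> :: real assume \<epsilon>: "0 < \<epsilon>"
    obtain \<xi>1 where \<xi>1: "\<xi>1 \<in> red_feas f Ih g K x" "\<xi>1 $ i < v x + \<epsilon>"
      using value_approx x \<epsilon> C(2) by blast
    obtain \<xi>2 where \<xi>2: "\<xi>2 \<in> red_feas f Ih g K y" "\<xi>2 $ i < v y + \<epsilon>"
      using value_approx y \<epsilon> C(2) by blast
    have "(1 - t) *\<^sub>R x + t *\<^sub>R y \<in> N" using convexD[OF C(1) x y] t C(2) by auto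
    then have "v ((1 - t) *\<^sub>R x + t *\<^sub>R y) \<le> ((1 - t) *\<^sub>R \<xi>1 + t *\<^sub>R \<xi>2) $ i"
      using x y t C(2) N(3) by (intro value_le red_feas_convex_comb \<xi>1(1) \<xi>2(1)) auto
    also have "\<dots> \<le> (1 - t) * (v x + \<epsilon>) + t * (v y + \<epsilon>)"
      using \<xi>1(2) \<xi>2(2) t by (simp add: add_mono mult_left_mono)
    finally show "v ((1 - t) *\<^sub>R x + t *\<^sub>R y) \<le> (1 - t) * v x + t * v y + \<epsilon>"
      by (simp add: algebra_simps)
  qed
qed

lemma value_locally_lipschitz: "\<exists>U C. open U \<and> ph \<in> U \<and> C-lipschitz_on U v"
proof -
  obtain r0 where r0: "0 < r0" "ball ph r0 \<subseteq> N" using N(1,2) open_contains_ball by blast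
  define r where "r = r0 / 2"
  have r: "0 < r" "ball ph (2 * r) \<subseteq> N" using r0 by (simp_all add: r_def)
  obtain B where "\<And>\<xi>. \<xi> \<in> X \<Longrightarrow> \<bar>\<xi> $ i\<bar> \<le> B" using X_component_bound by blast
  then have B: "- B \<le> \<xi> $ i \<and> \<xi> $ i \<le> B" if "\<xi> \<in> red_feas f Ih g K p" for \<xi> p
    using red_feas_subset that by (force simp: abs_le_iff)
  have value_bound: "\<bar>v p\<bar> \<le> B" if p: "p \<in> N" for p
  proof -
    obtain \<xi> where "\<xi> \<in> red_feas f Ih g K p" using feasible_nonempty[OF p] by blast
    moreover have "- B \<le> v p" using p B by (intro value_ge) auto
    ultimately show ?thesis using value_le[OF p] B by force
  qed
  have "v p - v q \<le> 2 * B" if "p \<in> ball ph (2 * r)" "q \<in> ball ph (2 * r)" for p q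
  proof -
    have "\<bar>v p\<bar> \<le> B" "\<bar>v q\<bar> \<le> B" using that r(2) value_bound by blast+
    then show ?thesis by linarith
  qed
  from convex_on_bounded_imp_lipschitz_on_ball[OF value_convex_on[OF convex_ball r(2)] r(1) this]
  show ?thesis using r(1) by (intro exI[of _ "ball ph r"]) auto
qed

end

section \<open>The relaxation-based bound\<close>

lemma xbox_eq_cbox: "xbox xL xU = cbox xL xU"
  by (auto simp: xbox_def mem_box_cart)

lemma finite_gidxs:
  assumes "\<And>k. k \<notin> Ih \<Longrightarrow> finite (La k)" "\<And>k. k \<notin> Ih \<Longrightarrow> finite (Lb k)"
  shows "finite (gidxs Ih La Lb :: ('x::finite, 'l) gidx set)"
proof -
  have "gidxs Ih La Lb = (\<lambda>(k, l). GA k l) ` (SIGMA k:- Ih. La k)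
      \<union> (\<lambda>(k, l). GB k l) ` (SIGMA k:- Ih. Lb k)
      \<union> range GLo \<union> range GUp"
    by (auto simp: gidxs_def)
  then show ?thesis using assms by (auto intro!: finite_SigmaI)
qed

lemma gfun_eq:
  "gfun a b xL xU (GA k l) = a k l" "gfun a b xL xU (GB k l) = (\<lambda>z. - b k l z)"
  "gfun a b xL xU (GLo k) = (\<lambda>z. xL $ k - fst z $ k)"
  "gfun a b xL xU (GUp k) = (\<lambda>z. fst z $ k - xU $ k)"
  by (simp_all add: fun_eq_iff)

lemma gfun_nonpos_iff:
  "(\<forall>k\<in>gidxs Ih La Lb. gfun a b xL xU k z \<le> 0) \<longleftrightarrow>
     (\<forall>k l. k \<notin> Ih \<longrightarrow> l \<in> La k \<longrightarrow> a k l z \<le> 0) \<and> (\<forall>k l. k \<notin> Ih \<longrightarrow> l \<in> Lb k \<longrightarrow> 0 \<le> b k l z) \<and>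
     fst z \<in> xbox xL xU"
proof -
  have "(\<forall>k\<in>gidxs Ih La Lb. gfun a b xL xU k z \<le> 0) \<longleftrightarrow>
      (\<forall>k l. k \<notin> Ih \<longrightarrow> l \<in> La k \<longrightarrow> gfun a b xL xU (GA k l) z \<le> 0) \<and>
      (\<forall>k l. k \<notin> Ih \<longrightarrow> l \<in> Lb k \<longrightarrow> gfun a b xL xU (GB k l) z \<le> 0) \<and>
      (\<forall>k. gfun a b xL xU (GLo k) z \<le> 0) \<and> (\<forall>k. gfun a b xL xU (GUp k) z \<le> 0)"
    unfolding gidxs_def by blast
  then show ?thesis by (auto simp: xbox_def)
qed

lemma red_feas_gfun_subset_xbox: "red_feas f Ih (gfun a b xL xU) (gidxs Ih La Lb) p \<subseteq> xbox xL xU"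
  by (auto simp: red_feas_def gfun_nonpos_iff)

lemma gfun_convex_on:
  assumes P: "convex P" and k: "k \<in> gidxs Ih La Lb"
    and acv: "\<forall>k l. k \<notin> Ih \<longrightarrow> l \<in> La k \<longrightarrow> C1_fun (acv k l) \<and> convex_on (xbox xL xU \<times> P) (acv k l)"
    and bcc: "\<forall>k l. k \<notin> Ih \<longrightarrow> l \<in> Lb k \<longrightarrow> C1_fun (bcc k l) \<and> concave_on (xbox xL xU \<times> P) (bcc k l)"
  shows "convex_on (xbox xL xU \<times> P) (gfun acv bcc xL xU k)"
proof -
  have XP: "convex (xbox xL xU \<times> P)" using P by (simp add: xbox_eq_cbox convex_Times)
  show ?thesis
  proof (cases k)
    case (GA a l)
    then show ?thesis using k acv by (auto simp: gidxs_def gfun_eq)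
  next
    case (GB a l)
    then show ?thesis using k bcc by (auto simp: gidxs_def gfun_eq concave_on_def)
  qed (use XP in \<open>auto intro!: convex_onI simp: gfun_eq algebra_simps\<close>)
qed

lemma C1_fun_differentiable: "C1_fun F \<Longrightarrow> F differentiable (at z)"
  unfolding C1_fun_def by (auto intro: differentiableI)

lemma gfun_differentiable:
  fixes acv bcc :: "'x::finite \<Rightarrow> 'l \<Rightarrow> (real^'x) \<times> (real^'p::finite) \<Rightarrow> real"
  assumes k: "k \<in> gidxs Ih La Lb"
    and acv: "\<forall>k l. k \<notin> Ih \<longrightarrow> l \<in> La k \<longrightarrow> C1_fun (acv k l) \<and> convex_on S (acv k l)"
    and bcc: "\<forall>k l. k \<notin> Ih \<longrightarrow> l \<in> Lb k \<longrightarrow> C1_fun (bcc k l) \<and> concave_on S (bcc k l)"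
  shows "gfun acv bcc xL xU k differentiable (at z)"
proof -
  have fst_nth: "(\<lambda>z. fst z $ a) differentiable (at z)" for a :: 'x
    by (intro bounded_linear_imp_differentiable
        bounded_linear_compose[OF bounded_linear_vec_nth bounded_linear_fst])
  show ?thesis
  proof (cases k)
    case (GA a l)
    then show ?thesis using k acv by (auto simp: gidxs_def gfun_eq C1_fun_differentiable)
  next
    case (GB a l)
    then show ?thesis
      using k bcc by (auto simp: gidxs_def gfun_eq C1_fun_differentiable intro: differentiable_minus)
  qed (auto simp: gfun_eq intro: differentiable_diff fst_nth)
qed

lemma relaxation_feasible_iff:
  assumes p: "p \<in> P"
    and La: "\<forall>k. k \<notin> Ih \<longrightarrow> finite (La k) \<and> La k \<noteq> {}"
    and Lb: "\<forall>k. k \<notin> Ih \<longrightarrow> finite (Lb k) \<and> Lb k \<noteq> {}"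
    and fcv_max: "\<forall>k. k \<notin> Ih \<longrightarrow> (\<forall>z\<in>xbox xL xU \<times> P. fcv z $ k = Max ((\<lambda>l. acv k l z) ` La k))"
    and fcc_min: "\<forall>k. k \<notin> Ih \<longrightarrow> (\<forall>z\<in>xbox xL xU \<times> P. fcc z $ k = Min ((\<lambda>l. bcc k l z) ` Lb k))"
    and h_relax: "\<forall>j\<in>Ih. \<forall>z\<in>xbox xL xU \<times> P. fcv z $ j = f z $ j \<and> fcc z $ j = f z $ j"
  shows "\<xi> \<in> xbox xL xU \<and> (\<forall>k. fcv (\<xi>, p) $ k \<le> 0 \<and> 0 \<le> fcc (\<xi>, p) $ k) \<longleftrightarrow>
      \<xi> \<in> red_feas f Ih (gfun acv bcc xL xU) (gidxs Ih La Lb) p"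
proof (cases "\<xi> \<in> xbox xL xU")
  case True
  then have z: "(\<xi>, p) \<in> xbox xL xU \<times> P" using p by simp
  have comp: "fcv (\<xi>, p) $ k \<le> 0 \<and> 0 \<le> fcc (\<xi>, p) $ k \<longleftrightarrow>
      (k \<in> Ih \<longrightarrow> f (\<xi>, p) $ k = 0) \<and>
      (k \<notin> Ih \<longrightarrow> (\<forall>l\<in>La k. acv k l (\<xi>, p) \<le> 0) \<and> (\<forall>l\<in>Lb k. 0 \<le> bcc k l (\<xi>, p)))" for k
  proof (cases "k \<in> Ih")
    case True
    then show ?thesis using h_relax z by auto
  next
    case False
    then show ?thesis using fcv_max fcc_min La Lb z by (simp add: Max_le_iff Min_ge_iff)
  qed
  have "(\<forall>k. fcv (\<xi>, p) $ k \<le> 0 \<and> 0 \<le> fcc (\<xi>, p) $ k) \<longleftrightarrow> (\<forall>j\<in>Ih. f (\<xi>, p) $ j = 0) \<and>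
      (\<forall>k l. k \<notin> Ih \<longrightarrow> l \<in> La k \<longrightarrow> acv k l (\<xi>, p) \<le> 0) \<and>
      (\<forall>k l. k \<notin> Ih \<longrightarrow> l \<in> Lb k \<longrightarrow> 0 \<le> bcc k l (\<xi>, p))"
    unfolding comp by blast
  then show ?thesis using True by (simp add: red_feas_def gfun_nonpos_iff)
next
  case False
  then show ?thesis using red_feas_gfun_subset_xbox by blast
qed


lemma xcv_convex_parametric_program:
  fixes f fcv fcc :: "(real^'x::finite) \<times> (real^'p::finite) \<Rightarrow> real^'x"
    and acv bcc :: "'x \<Rightarrow> 'l \<Rightarrow> (real^'x) \<times> (real^'p) \<Rightarrow> real"
  assumes P_convex: "convex P"
    and La_fin: "\<forall>k. k \<notin> Ih \<longrightarrow> finite (La k) \<and> La k \<noteq> {}"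
    and Lb_fin: "\<forall>k. k \<notin> Ih \<longrightarrow> finite (Lb k) \<and> Lb k \<noteq> {}"
    and fcv_max: "\<forall>k. k \<notin> Ih \<longrightarrow> (\<forall>z\<in>xbox xL xU \<times> P. fcv z $ k = Max ((\<lambda>l. acv k l z) ` La k))"
    and fcc_min: "\<forall>k. k \<notin> Ih \<longrightarrow> (\<forall>z\<in>xbox xL xU \<times> P. fcc z $ k = Min ((\<lambda>l. bcc k l z) ` Lb k))"
    and h_relax: "\<forall>j\<in>Ih. \<forall>z\<in>xbox xL xU \<times> P. fcv z $ j = f z $ j \<and> fcc z $ j = f z $ j"
    and h_affine: "\<forall>j\<in>Ih. affine_fun (\<lambda>z. f z $ j)"
    and acv_C1: "\<forall>k l. k \<notin> Ih \<longrightarrow> l \<in> La k \<longrightarrow> C1_fun (acv k l) \<and> convex_on (xbox xL xU \<times> P) (acv k l)"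
    and bcc_C1: "\<forall>k l. k \<notin> Ih \<longrightarrow> l \<in> Lb k \<longrightarrow> C1_fun (bcc k l) \<and> concave_on (xbox xL xU \<times> P) (bcc k l)"
    and N: "open N" "ph \<in> N" "N \<subseteq> P"
    and slater: "\<forall>p\<in>N. \<exists>\<xi>. (\<forall>j\<in>Ih. f (\<xi>, p) $ j = 0) \<and>
      (\<forall>k\<in>gidxs Ih La Lb. gfun acv bcc xL xU k (\<xi>, p) < 0)"
    and optimal: "\<xi>h \<in> red_feas f Ih (gfun acv bcc xL xU) (gidxs Ih La Lb) ph"
      "\<forall>\<xi>\<in>red_feas f Ih (gfun acv bcc xL xU) (gidxs Ih La Lb) ph. \<xi>h $ i \<le> \<xi> $ i"
  shows "convex_parametric_program (xcv fcv fcc xL xU i) f Ih (gfun acv bcc xL xU) (gidxs Ih La Lb)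
      (xbox xL xU) P N i ph \<xi>h"
proof
  show "finite (gidxs Ih La Lb)" using La_fin Lb_fin by (intro finite_gidxs) auto
  show "bounded (xbox xL xU)" by (simp add: xbox_eq_cbox)
  show "red_feas f Ih (gfun acv bcc xL xU) (gidxs Ih La Lb) p \<subseteq> xbox xL xU" for p
    by (rule red_feas_gfun_subset_xbox)
  show "convex_on (xbox xL xU \<times> P) (gfun acv bcc xL xU k)" if "k \<in> gidxs Ih La Lb" for k
    using P_convex that acv_C1 bcc_C1 by (rule gfun_convex_on)
  show "gfun acv bcc xL xU k differentiable (at (\<xi>h, ph))" if "k \<in> gidxs Ih La Lb" for k
    using that acv_C1 bcc_C1 by (rule gfun_differentiable)
  show "affine_fun (\<lambda>z. f z $ j)" if "j \<in> Ih" for j using h_affine that by blast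
  show "open N" "ph \<in> N" "N \<subseteq> P" by (fact N)+
  show "xcv fcv fcc xL xU i p
      = Inf ((\<lambda>\<xi>. \<xi> $ i) ` red_feas f Ih (gfun acv bcc xL xU) (gidxs Ih La Lb) p)"
    if "p \<in> N" for p
  proof -
    have "p \<in> P" using that N(3) by blast
    from relaxation_feasible_iff[OF this La_fin Lb_fin fcv_max fcc_min h_relax]
    show ?thesis unfolding xcv_def by (simp add: Setcompr_eq_image)
  qed
  show "\<exists>\<xi>. (\<forall>j\<in>Ih. f (\<xi>, p) $ j = 0) \<and> (\<forall>k\<in>gidxs Ih La Lb. gfun acv bcc xL xU k (\<xi>, p) < 0)"
    if "p \<in> N" for p
    using slater that by blast
  show "\<xi>h \<in> red_feas f Ih (gfun acv bcc xL xU) (gidxs Ih La Lb) ph" by (fact optimal(1))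
  show "\<xi>h $ i \<le> \<xi> $ i" if "\<xi> \<in> red_feas f Ih (gfun acv bcc xL xU) (gidxs Ih La Lb) ph" for \<xi>
    using optimal(2) that by blast
qed

theorem theorem5p4:
  fixes f fcv fcc :: "(real^'x::finite) \<times> (real^'p::finite) \<Rightarrow> real^'x"
    and xL xU :: "real^'x"
    and P :: "(real^'p) set"
    and ximp :: "real^'p \<Rightarrow> real^'x"
    and Ih :: "'x set"
    and acv bcc :: "'x \<Rightarrow> 'l \<Rightarrow> (real^'x) \<times> (real^'p) \<Rightarrow> real"
    and La Lb :: "'x \<Rightarrow> 'l set"
    and i :: 'x
    and ph :: "real^'p"
    and \<xi>h :: "real^'x"
  defines "X \<equiv> xbox xL xU"
    and "Q \<equiv> {p \<in> P. \<exists>z. f (z, p) = 0}"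
    and "g \<equiv> gfun acv bcc xL xU"
    and "K \<equiv> gidxs Ih La Lb"
    and "Act \<equiv> {k \<in> gidxs Ih La Lb. gfun acv bcc xL xU k (\<xi>h, ph) = 0}"
    and "AA \<equiv> (\<lambda>k. gradx (gfun acv bcc xL xU k) (\<xi>h, ph))"
    and "GAr \<equiv> (\<lambda>k. - grady (gfun acv bcc xL xU k) (\<xi>h, ph))"
    and "BB \<equiv> (\<lambda>j. gradx (\<lambda>z. f z $ j) (\<xi>h, ph))"
    and "GBr \<equiv> (\<lambda>j. - grady (\<lambda>z. f z $ j) (\<xi>h, ph))"
  assumes P_convex: "convex P" and P_compact: "compact P"
    and Q_nonempty: "Q \<noteq> {}"
    and implicit_fun: "\<forall>p\<in>Q. f (ximp p, p) = 0 \<and> ximp p \<in> X"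
    \<comment> \<open>convex/concave relaxations of f on X \<times> P\<close>
    and fcv_convex: "\<forall>k. convex_on (X \<times> P) (\<lambda>z. fcv z $ k)"
    and fcc_concave: "\<forall>k. concave_on (X \<times> P) (\<lambda>z. fcc z $ k)"
    and relax: "\<forall>z\<in>X \<times> P. \<forall>k. fcv z $ k \<le> f z $ k \<and> f z $ k \<le> fcc z $ k"
    \<comment> \<open>f = (f~, h): h affine (relaxed by itself), each component of f~ non-affine\<close>
    and h_affine: "\<forall>j\<in>Ih. affine_fun (\<lambda>z. f z $ j)"
    and h_relax: "\<forall>j\<in>Ih. \<forall>z\<in>X \<times> P. fcv z $ j = f z $ j \<and> fcc z $ j = f z $ j"
    and ftilde_nonaffine: "\<forall>k. k \<notin> Ih \<longrightarrow> \<not> affine_fun (\<lambda>z. f z $ k)"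
    \<comment> \<open>relaxations of f~ as max / min of finitely many C^1 convex / concave functions\<close>
    and La_fin: "\<forall>k. k \<notin> Ih \<longrightarrow> finite (La k) \<and> La k \<noteq> {}"
    and Lb_fin: "\<forall>k. k \<notin> Ih \<longrightarrow> finite (Lb k) \<and> Lb k \<noteq> {}"
    and fcv_max: "\<forall>k. k \<notin> Ih \<longrightarrow> (\<forall>z\<in>X \<times> P. fcv z $ k = Max ((\<lambda>l. acv k l z) ` La k))"
    and fcc_min: "\<forall>k. k \<notin> Ih \<longrightarrow> (\<forall>z\<in>X \<times> P. fcc z $ k = Min ((\<lambda>l. bcc k l z) ` Lb k))"
    and acv_C1: "\<forall>k l. k \<notin> Ih \<longrightarrow> l \<in> La k \<longrightarrow> C1_fun (acv k l) \<and> convex_on (X \<times> P) (acv k l)"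
    and bcc_C1: "\<forall>k l. k \<notin> Ih \<longrightarrow> l \<in> Lb k \<longrightarrow> C1_fun (bcc k l) \<and> concave_on (X \<times> P) (bcc k l)"
    \<comment> \<open>assumptions at ph\<close>
    and ph_int: "ph \<in> interior Q"
    and LICQ_h: "inj_on BB Ih \<and> independent (BB ` Ih)"
    and slater: "\<exists>N. open N \<and> ph \<in> N \<and> N \<subseteq> Q \<and>
        (\<forall>p\<in>N. \<exists>\<xi>\<in>X. (\<forall>j\<in>Ih. f (\<xi>, p) $ j = 0) \<and> (\<forall>k\<in>K. g k (\<xi>, p) < 0))"
    and xih_opt: "\<xi>h \<in> red_feas f Ih g K ph \<and> (\<forall>\<xi>\<in>red_feas f Ih g K ph. \<xi>h $ i \<le> \<xi> $ i)"
  shows "L_smooth_at (xcv fcv fcc xL xU i) ph \<and>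
    (\<forall>ms :: (real^'p) list.
      let \<phi> = ld_seq (xcv fcv fcc xL xU i) ph ms;
          F = lp_feas Act Ih AA BB (axis i 1) GAr GBr ms \<phi>;
          D = (\<lambda>j. argmax_set (F j) (\<lambda>lam. lp_obj Act Ih GAr GBr lam (ms ! j)))
      in (\<forall>j \<le> length ms. \<forall>d. is_max_val (F j) (\<lambda>lam. lp_obj Act Ih GAr GBr lam d) (\<phi> j d)) \<and>
         (\<forall>j \<in> {1..<length ms}.
            D j = argmax_set (D (j - 1)) (\<lambda>lam. lp_obj Act Ih GAr GBr lam (ms ! j)) \<and>
            D j \<subseteq> D (j - 1)) \<and>
         (ms \<noteq> [] \<longrightarrow> (\<forall>lam \<in> D (length ms - 1).
            ld_deriv (xcv fcv fcc xL xU i) ph ms =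
              map (\<lambda>q. lp_obj Act Ih GAr GBr lam (ms ! q)) [0..<length ms])))"
proof -
  obtain N where N: "open N" "ph \<in> N" "N \<subseteq> Q"
    and "\<forall>p\<in>N. \<exists>\<xi>\<in>X. (\<forall>j\<in>Ih. f (\<xi>, p) $ j = 0) \<and> (\<forall>k\<in>K. g k (\<xi>, p) < 0)"
    using slater by blast
  then have slater_N: "\<forall>p\<in>N. \<exists>\<xi>. (\<forall>j\<in>Ih. f (\<xi>, p) $ j = 0) \<and>
      (\<forall>k\<in>gidxs Ih La Lb. gfun acv bcc xL xU k (\<xi>, p) < 0)"
    unfolding g_def K_def by blast
  have program: "convex_parametric_program (xcv fcv fcc xL xU i) f Ih
      (gfun acv bcc xL xU) (gidxs Ih La Lb) (xbox xL xU) P N i ph \<xi>h"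
  proof (rule xcv_convex_parametric_program[OF P_convex La_fin Lb_fin fcv_max[unfolded X_def]
        fcc_min[unfolded X_def] h_relax[unfolded X_def] h_affine acv_C1[unfolded X_def]
        bcc_C1[unfolded X_def] N(1,2) _ slater_N])
    show "N \<subseteq> P" using N(3) by (auto simp: Q_def)
  qed (use xih_opt in \<open>simp_all add: g_def K_def\<close>)
  have fin: "finite Act" "finite Ih"
    using convex_parametric_program.finite_active[OF program] by (simp_all add: Act_def)
  have deriv: "\<exists>L. has_dir_deriv (xcv fcv fcc xL xU i) ph d L \<and>
      is_max_val {lam. lp_dualfeas Act Ih AA BB (axis i 1) lam}
        (\<lambda>lam. lp_obj Act Ih GAr GBr lam d) L" for d
    using convex_parametric_program.has_dir_deriv_value[OF program]
    unfolding Act_def AA_def BB_def GAr_def GBr_def .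
  have "L_smooth_at (xcv fcv fcc xL xU i) ph"
    unfolding L_smooth_at_def
    using convex_parametric_program.value_locally_lipschitz[OF program] deriv
      ld_seq_nested_lps(2)[OF fin deriv]
    by blast
  then show ?thesis using ld_deriv_nested_lps[OF fin deriv] by blast
qed

end
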